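(* Let $\mathcal B$ be a BMDP and consider the Q-learning process with learning rates $\lambda_i\in[0,1]$ satisfying $\sum_{i=0}^\infty\lambda_i=\infty$ and $\sum_{i=0}^\infty\lambda_i^2<\infty$, and a fixed selection distribution with $p_{q,a}\ge p_{\min}>0$ for all pairs, started from any $Q_0\ge\mathbf 0$. Then for every pair $(q,a)$ with $Q^*(q,a)=\infty$, almost surely $Q_i(q,a)\to\infty$ as $i\to\infty$.
   Context: A branching Markov decision process (BMDP) is a tuple $\mathcal B=(\mathcal T,A,p,c)$ where $\mathcal T$ is a finite set of types, $A$ is a finite set of actions, $p:\mathcal T\times A\to \mathrm{Dist}(\mathcal T^* )$ is a partial function assigning to some pairs $(q,a)$ a probability distribution with finite support over the set $\mathcal T^*$ of finite lists of types, and $c:\mathcal T\times A\to\mathbb R_{>0}$ is a strictly positive cost function. $A(q)$ is the (nonempty) set of $a$ with $p(q,a)$ defined. For a list $\alpha$, $|\alpha|$ is its length and $\alpha_i$ its $i$-th element. The BMDP induces an MDP on lists of entities: an action $(i,a)$ with $a\in A(\alpha_i)$ replaces entity $\alpha_i$ of the current list by a list $\beta$ drawn from $p(\alpha_i,a)$ at cost $c(\alpha_i,a)$; the empty list is absorbing with no cost. $\mathbf c^*_q\in[0,\infty]$ is the infimum over all (history-dependent, randomized) strategies of the expected total cost starting from the single entity $q$. Define $Q^*(q,a)=c(q,a)+\sum_{\alpha\in\mathcal T^*}p(q,a)(\alpha)\sum_{j=1}^{|\alpha|}\mathbf c^*_{\alpha_j}\in[0,\infty]$, with conventions $0\cdot\infty=0$,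 $r+\infty=\infty$. Q-learning process for a BMDP: Q-values are vectors $Q$ indexed by pairs $(q,a)$ with $q\in\mathcal T$, $a\in A(q)$. Given deterministic learning rates $\lambda_i\in[0,1]$, a fixed probability distribution $(p_{q,a})$ over pairs and an initial vector $Q_0\ge\mathbf 0$, at each step $i$ a pair $(q_i,a_i)$ is selected with probability $p_{q_i,a_i}$ independently of all previous randomness, a list $\beta^i$ is drawn from $p(q_i,a_i)$ independently, and $Q_{i+1}(q_i,a_i)=(1-\lambda_i)Q_i(q_i,a_i)+\lambda_i\big(c(q_i,a_i)+\sum_{j=1}^{|\beta^i|}\min_{a'\in A(\beta^i_j)}Q_i(\beta^i_j,a')\big)$, all other entries unchanged. *)

theory Defs
  imports "HOL-Probability.Probability"
begin

text \<open>A BMDP is given by: types 'q (finite type), actions 'a (finite type),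
  enabled actions A :: 'q => 'a set, transition distributions p q a (a list-valued pmf,
  meaningful for a in A q), and costs c q a.\<close>

definition is_bmdp :: "('q::finite \<Rightarrow> 'a::finite set) \<Rightarrow> ('q \<Rightarrow> 'a \<Rightarrow> 'q list pmf)
    \<Rightarrow> ('q \<Rightarrow> 'a \<Rightarrow> real) \<Rightarrow> bool" where
  "is_bmdp A p c \<longleftrightarrow> (\<forall>q. A q \<noteq> {}) \<and>
     (\<forall>q. \<forall>a\<in>A q. finite (set_pmf (p q a)) \<and> c q a > 0)"

text \<open>Histories: list of past (state, chosen action) pairs; the current state is a
  separate argument. An action of the induced MDP is a pair (i, a): entity number i
  (0-based) is expanded with BMDP action a.\<close>

type_synonym ('q,'a) hist = "('q list \<times> (nat \<times> 'a)) list"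
type_synonym ('q,'a) strategy = "('q,'a) hist \<Rightarrow> 'q list \<Rightarrow> (nat \<times> 'a) pmf"

definition strategies :: "('q \<Rightarrow> 'a set) \<Rightarrow> ('q,'a) strategy set" where
  "strategies A = {\<sigma>. \<forall>h \<alpha>. \<alpha> \<noteq> [] \<longrightarrow>
      set_pmf (\<sigma> h \<alpha>) \<subseteq> {(i,a). i < length \<alpha> \<and> a \<in> A (\<alpha> ! i)}}"

definition replace_at :: "'q list \<Rightarrow> nat \<Rightarrow> 'q list \<Rightarrow> 'q list" where
  "replace_at \<alpha> i \<beta> = take i \<alpha> @ \<beta> @ drop (Suc i) \<alpha>"

primrec ncost :: "('q \<Rightarrow> 'a \<Rightarrow> 'q list pmf) \<Rightarrow> ('q \<Rightarrow> 'a \<Rightarrow> real) \<Rightarrow> ('q,'a) strategy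
    \<Rightarrow> nat \<Rightarrow> ('q,'a) hist \<Rightarrow> 'q list \<Rightarrow> ennreal" where
  "ncost p c \<sigma> 0 = (\<lambda>h \<alpha>. 0)"
| "ncost p c \<sigma> (Suc n) = (\<lambda>h \<alpha>. if \<alpha> = [] then 0 else
     \<integral>\<^sup>+ x. (ennreal (c (\<alpha> ! fst x) (snd x)) +
        \<integral>\<^sup>+ \<beta>. ncost p c \<sigma> n (h @ [(\<alpha>, x)]) (replace_at \<alpha> (fst x) \<beta>)
          \<partial>measure_pmf (p (\<alpha> ! fst x) (snd x)))
     \<partial>measure_pmf (\<sigma> h \<alpha>))"

text \<open>Expected total cost = limit (supremum) of the expected n-step costs
  (monotone convergence; costs are nonnegative).\<close>
definition total_cost :: "('q \<Rightarrow> 'a \<Rightarrow> 'q list pmf) \<Rightarrow> ('q \<Rightarrow> 'a \<Rightarrow> real) \<Rightarrow> ('q,'a) strategy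
    \<Rightarrow> 'q list \<Rightarrow> ennreal" where
  "total_cost p c \<sigma> \<alpha> = (SUP n. ncost p c \<sigma> n [] \<alpha>)"

definition cstar :: "('q \<Rightarrow> 'a set) \<Rightarrow> ('q \<Rightarrow> 'a \<Rightarrow> 'q list pmf) \<Rightarrow> ('q \<Rightarrow> 'a \<Rightarrow> real)
    \<Rightarrow> 'q \<Rightarrow> ennreal" where
  "cstar A p c q = (INF \<sigma>\<in>strategies A. total_cost p c \<sigma> [q])"

definition Qstar :: "('q \<Rightarrow> 'a set) \<Rightarrow> ('q \<Rightarrow> 'a \<Rightarrow> 'q list pmf) \<Rightarrow> ('q \<Rightarrow> 'a \<Rightarrow> real)
    \<Rightarrow> 'q \<Rightarrow> 'a \<Rightarrow> ennreal" where
  "Qstar A p c q a = ennreal (c q a) +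
     (\<integral>\<^sup>+ \<alpha>. (\<Sum>j<length \<alpha>. cstar A p c (\<alpha> ! j)) \<partial>measure_pmf (p q a))"

definition sample_pmf :: "('q \<Rightarrow> 'a \<Rightarrow> 'q list pmf) \<Rightarrow> ('q \<times> 'a) pmf
    \<Rightarrow> (('q \<times> 'a) \<times> 'q list) pmf" where
  "sample_pmf p sel = sel \<bind> (\<lambda>qa. map_pmf (\<lambda>\<beta>. (qa, \<beta>)) (p (fst qa) (snd qa)))"

definition sample_space :: "('q \<Rightarrow> 'a \<Rightarrow> 'q list pmf) \<Rightarrow> ('q \<times> 'a) pmf
    \<Rightarrow> (nat \<Rightarrow> ('q \<times> 'a) \<times> 'q list) measure" where
  "sample_space p sel = PiM UNIV (\<lambda>_. measure_pmf (sample_pmf p sel))"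

primrec qlearn :: "('q \<Rightarrow> 'a set) \<Rightarrow> ('q \<Rightarrow> 'a \<Rightarrow> real) \<Rightarrow> (nat \<Rightarrow> real)
    \<Rightarrow> ('q \<Rightarrow> 'a \<Rightarrow> real) \<Rightarrow> (nat \<Rightarrow> ('q \<times> 'a) \<times> 'q list) \<Rightarrow> nat \<Rightarrow> 'q \<Rightarrow> 'a \<Rightarrow> real" where
  "qlearn A c lr Q0 \<omega> 0 = Q0"
| "qlearn A c lr Q0 \<omega> (Suc i) =
     (let Q = qlearn A c lr Q0 \<omega> i; q = fst (fst (\<omega> i)); a = snd (fst (\<omega> i)); \<beta> = snd (\<omega> i)
      in Q(q := (Q q)(a := (1 - lr i) * Q q a +
             lr i * (c q a + (\<Sum>j<length \<beta>. Min (Q (\<beta> ! j) ` A (\<beta> ! j)))))))"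

end

theory Submission
  imports Defs
begin

text \<open>Value iteration from zero, \<open>v\<^sub>n = B\<^sup>n 0\<close> with \<open>B\<close> the Bellman operator, increases to a
  limit that dominates \<open>Q\<^sup>*\<close>, because the strategy that is greedy for the limit has expected cost
  at most the limit. Hence \<open>Q\<^sup>*(q,a) = \<infinity>\<close> forces \<open>v\<^sub>n(q,a) \<rightarrow> \<infinity>\<close>, and it suffices to show,
  by induction on \<open>n\<close>, that almost surely \<open>Q\<^sub>i\<close> eventually exceeds \<open>v\<^sub>n - \<epsilon>\<close> at every pair.
  Once all Q-values lie above \<open>v\<^sub>n - \<delta>\<close>, the Q-value \<open>y\<^sub>i\<close> of a fixed pair obeys an averaging
  recursion \<open>y\<^sub>i\<^sub>+\<^sub>1 \<ge> (1 - \<lambda>\<^sub>i u\<^sub>i) y\<^sub>i + \<lambda>\<^sub>i u\<^sub>i z\<^sub>i\<close> driven by i.i.d. samples \<open>(u\<^sub>i, z\<^sub>i)\<close> with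
  \<open>E[u z] / E[u] \<ge> v\<^sub>n\<^sub>+\<^sub>1 - \<epsilon>/2\<close>. Cutting time into blocks carrying learning-rate mass about \<open>h\<close>,
  Hoeffding's inequality and Borel-Cantelli (using \<open>\<Sum> \<lambda>\<^sub>i\<^sup>2 < \<infinity>\<close>) show that eventually every block
  average of \<open>u\<close> and \<open>u z\<close> is close to its mean, and on such blocks \<open>y\<close> contracts geometrically
  towards \<open>E[u z] / E[u]\<close> from below.\<close>

section \<open>Independent samples and block averages\<close>

abbreviation iid_space :: "'b pmf \<Rightarrow> (nat \<Rightarrow> 'b) measure" where
  "iid_space D \<equiv> PiM UNIV (\<lambda>_. measure_pmf D)"

lemma product_prob_space_iid: "product_prob_space (\<lambda>_::nat. measure_pmf D)"
  by (intro product_prob_spaceI measure_pmf.prob_space_axioms)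

lemma prob_space_iid_space: "prob_space (iid_space D)"
  by (intro prob_space_PiM measure_pmf.prob_space_axioms)

lemma indep_vars_iid_coordinates:
  assumes "finite I"
  shows "prob_space.indep_vars (iid_space D) (\<lambda>_. measure_pmf D) (\<lambda>k \<omega>. \<omega> k) I"
proof (cases "I = {}")
  case True
  interpret prob_space "iid_space D" by (rule prob_space_iid_space)
  show ?thesis using True by (simp add: indep_vars_def indep_sets_def)
next
  case False
  interpret P: product_prob_space "\<lambda>_::nat. measure_pmf D" UNIV by (rule product_prob_space_iid)
  have marginal: "(\<lambda>i. distr (iid_space D) (measure_pmf D) (\<lambda>\<omega>. \<omega> i)) = (\<lambda>_. measure_pmf D)"
    using P.PiM_component by (intro ext) simp
  have restrict: "distr (iid_space D) (PiM I (\<lambda>_. measure_pmf D)) (\<lambda>x. restrict x I) = PiM I (\<lambda>_. measure_pmf D)"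
    using P.distr_PiM_restrict_finite[OF assms] by simp
  have "P.indep_vars (\<lambda>_. measure_pmf D) (\<lambda>k \<omega>. \<omega> k) I \<longleftrightarrow>
      distr (iid_space D) (PiM I (\<lambda>_. measure_pmf D)) (\<lambda>x. restrict x I) =
      PiM I (\<lambda>i. distr (iid_space D) (measure_pmf D) (\<lambda>\<omega>. \<omega> i))"
    by (rule P.indep_vars_iff_distr_eq_PiM[OF False]) simp
  then show ?thesis by (simp only: marginal restrict)
qed

lemma integral_iid_coordinate:
  fixes g :: "'b \<Rightarrow> real"
  shows "integral\<^sup>L (iid_space D) (\<lambda>\<omega>. g (\<omega> k)) = measure_pmf.expectation D g"
proof -
  interpret P: product_prob_space "\<lambda>_::nat. measure_pmf D" UNIV by (rule product_prob_space_iid)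
  have "integral\<^sup>L (distr (iid_space D) (measure_pmf D) (\<lambda>\<omega>. \<omega> k)) g
     = integral\<^sup>L (iid_space D) (\<lambda>\<omega>. g (\<omega> k))"
    by (rule integral_distr) auto
  then show ?thesis using P.PiM_component[of k] by simp
qed

lemma exp_minus_le_inverse:
  assumes "0 < x"
  shows "exp (- x) \<le> 1 / (x::real)"
proof -
  have "x \<le> exp x" using exp_ge_add_one_self[of x] by linarith
  then show ?thesis using assms by (simp add: exp_minus field_simps)
qed

text \<open>Hoeffding's inequality, with the exponential bound weakened to a quadratic one so that
  the bounds can be summed over blocks.\<close>
lemma iid_weighted_sum_lower_deviation:
  fixes D :: "'b pmf" and g :: "'b \<Rightarrow> real" and w :: "nat \<Rightarrow> real"
  assumes g: "\<And>x. \<bar>g x\<bar> \<le> R" "R > 0" and w: "\<And>i. i \<in> I \<Longrightarrow> 0 \<le> w i"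
    and I: "finite I" and L: "(\<Sum>i\<in>I. w i) > 0" and t: "t > 0"
  shows "measure (iid_space D)
           {\<omega>. (\<Sum>i\<in>I. w i * g (\<omega> i)) \<le> (\<Sum>i\<in>I. w i) * (measure_pmf.expectation D g - t)}
     \<le> 2 * R\<^sup>2 * (\<Sum>i\<in>I. (w i)\<^sup>2) / (t * (\<Sum>i\<in>I. w i))\<^sup>2"
proof -
  interpret prob_space "iid_space D" by (rule prob_space_iid_space)
  define L where "L = (\<Sum>i\<in>I. w i)"
  define s where "s = (\<Sum>i\<in>I. (w i)\<^sup>2)"
  define X where "X = (\<lambda>i (\<omega>::nat \<Rightarrow> 'b). w i * g (\<omega> i))"
  define Eg where "Eg = measure_pmf.expectation D g"
  have s_pos: "s > 0"
  proof -
    obtain i where i: "i \<in> I" "w i \<noteq> 0"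
      using L by (metis less_irrefl sum.neutral)
    have "0 < (w i)\<^sup>2" using i by simp
    also have "\<dots> \<le> s" unfolding s_def by (rule member_le_sum) (use i I in auto)
    finally show ?thesis .
  qed
  interpret H: Hoeffding_ineq "iid_space D" I X "\<lambda>i. - (w i * R)" "\<lambda>i. w i * R" "L * Eg"
  proof unfold_locales
    show "finite I" by (fact I)
    have "indep_vars (\<lambda>_. borel) (\<lambda>i \<omega>. (\<lambda>x. w i * g x) (\<omega> i)) I"
      by (rule indep_vars_compose2[OF indep_vars_iid_coordinates[OF I]]) simp
    then show "indep_vars (\<lambda>_. borel) X I" unfolding X_def by simp
    show "AE \<omega> in iid_space D. X i \<omega> \<in> {- (w i * R)..w i * R}" if "i \<in> I" for i
    proof (rule AE_I2)
      fix \<omega> :: "nat \<Rightarrow> 'b"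
      have "\<bar>w i * g (\<omega> i)\<bar> \<le> w i * R"
        using g(1)[of "\<omega> i"] w[OF that] by (simp add: abs_mult mult_left_mono)
      then show "X i \<omega> \<in> {- (w i * R)..w i * R}" unfolding X_def by (auto simp: abs_le_iff)
    qed
    show "L * Eg \<equiv> \<Sum>i\<in>I. expectation (X i)"
      by (simp add: X_def Eg_def L_def integral_iid_coordinate sum_distrib_right)
  qed
  have sq: "(\<Sum>i\<in>I. (w i * R - - (w i * R))\<^sup>2) = 4 * R\<^sup>2 * s"
    by (simp add: s_def sum_distrib_left power2_eq_square algebra_simps)
  have "measure (iid_space D) {\<omega>. (\<Sum>i\<in>I. X i \<omega>) \<le> L * Eg - t * L}
      = prob {\<omega> \<in> space (iid_space D). (\<Sum>i\<in>I. X i \<omega>) \<le> L * Eg - t * L}"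
    by (simp add: space_PiM)
  also have "\<dots> \<le> exp (-2 * (t * L)\<^sup>2 / (\<Sum>i\<in>I. (w i * R - - (w i * R))\<^sup>2))"
    by (rule H.Hoeffding_ineq_le) (use t L s_pos g(2) sq in \<open>auto simp: L_def\<close>)
  also have "\<dots> = exp (- ((t * L)\<^sup>2 / (2 * R\<^sup>2 * s)))"
    unfolding sq using s_pos g(2) by (simp add: field_simps power2_eq_square)
  also have "\<dots> \<le> 2 * R\<^sup>2 * s / (t * L)\<^sup>2"
    using exp_minus_le_inverse[of "(t * L)\<^sup>2 / (2 * R\<^sup>2 * s)"] t L s_pos g(2)
    by (simp add: L_def)
  finally show ?thesis by (simp add: X_def L_def s_def Eg_def algebra_simps)
qed

lemma summable_block_sums:
  fixes f :: "nat \<Rightarrow> real" and b :: "nat \<Rightarrow> nat"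
  assumes f: "\<And>i. 0 \<le> f i" "summable f" and b: "strict_mono b"
  shows "summable (\<lambda>k. \<Sum>i\<in>{b k..<b (Suc k)}. f i)"
proof (rule summableI_nonneg_bounded)
  show "0 \<le> (\<Sum>i\<in>{b k..<b (Suc k)}. f i)" for k using f by (simp add: sum_nonneg)
  have telescope: "(\<Sum>k<n. \<Sum>i\<in>{b k..<b (Suc k)}. f i) = (\<Sum>i\<in>{b 0..<b n}. f i)" for n
  proof (induction n)
    case (Suc n)
    have "b 0 \<le> b n" "b n \<le> b (Suc n)" using b by (simp_all add: strict_mono_less_eq)
    then show ?case using Suc by (simp add: sum.atLeastLessThan_concat)
  qed simp
  show "(\<Sum>k<n. \<Sum>i\<in>{b k..<b (Suc k)}. f i) \<le> suminf f" for n
  proof -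
    have "(\<Sum>i\<in>{b 0..<b n}. f i) \<le> (\<Sum>i<b n. f i)" by (rule sum_mono2) (use f in auto)
    also have "\<dots> \<le> suminf f" by (rule sum_le_suminf) (use f in auto)
    finally show ?thesis by (simp only: telescope)
  qed
qed

text \<open>Since every block has weight at least \<open>h\<close>, the bound above makes the probabilities of
  the bad events summable (by \<open>\<Sum> w\<^sub>i\<^sup>2 < \<infinity>\<close>), so Borel-Cantelli applies.\<close>
lemma iid_block_sums_eventually_above:
  fixes D :: "'b pmf" and g :: "'b \<Rightarrow> real" and w :: "nat \<Rightarrow> real" and b :: "nat \<Rightarrow> nat"
  assumes g: "\<And>x. \<bar>g x\<bar> \<le> R" "R > 0"
    and w: "\<And>i. 0 \<le> w i" and w_sq: "summable (\<lambda>i. (w i)\<^sup>2)"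
    and b: "strict_mono b" and blocks: "\<And>k. h \<le> (\<Sum>i\<in>{b k..<b (Suc k)}. w i)"
    and h: "h > 0" and t: "t > 0"
  shows "AE \<omega> in iid_space D. \<forall>\<^sub>F k in sequentially.
      (\<Sum>i\<in>{b k..<b (Suc k)}. w i) * (measure_pmf.expectation D g - t)
        < (\<Sum>i\<in>{b k..<b (Suc k)}. w i * g (\<omega> i))"
proof -
  interpret prob_space "iid_space D" by (rule prob_space_iid_space)
  define Bad where "Bad = (\<lambda>k. {\<omega>. (\<Sum>i\<in>{b k..<b (Suc k)}. w i * g (\<omega> i))
      \<le> (\<Sum>i\<in>{b k..<b (Suc k)}. w i) * (measure_pmf.expectation D g - t)})"
  have [measurable]: "(\<lambda>\<omega>. g (\<omega> i)) \<in> borel_measurable (iid_space D)" for i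
    by (rule measurable_compose[OF measurable_component_singleton]) simp_all
  have Bad_sets: "Bad k \<in> sets (iid_space D)" for k
  proof -
    have "Bad k = {\<omega> \<in> space (iid_space D). (\<Sum>i\<in>{b k..<b (Suc k)}. w i * g (\<omega> i))
        \<le> (\<Sum>i\<in>{b k..<b (Suc k)}. w i) * (measure_pmf.expectation D g - t)}"
      by (simp add: Bad_def space_PiM)
    also have "\<dots> \<in> sets (iid_space D)" by measurable
    finally show ?thesis .
  qed
  have bound: "measure (iid_space D) (Bad k) \<le> 2 * R\<^sup>2 / (t * h)\<^sup>2 * (\<Sum>i\<in>{b k..<b (Suc k)}. (w i)\<^sup>2)" for k
  proof -
    have "measure (iid_space D) (Bad k)
        \<le> 2 * R\<^sup>2 * (\<Sum>i\<in>{b k..<b (Suc k)}. (w i)\<^sup>2) / (t * (\<Sum>i\<in>{b k..<b (Suc k)}. w i))\<^sup>2"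
      unfolding Bad_def
      by (rule iid_weighted_sum_lower_deviation) (use g w blocks[of k] h t in auto)
    also have "\<dots> \<le> 2 * R\<^sup>2 * (\<Sum>i\<in>{b k..<b (Suc k)}. (w i)\<^sup>2) / (t * h)\<^sup>2"
    proof (rule frac_le)
      show "0 \<le> 2 * R\<^sup>2 * (\<Sum>i\<in>{b k..<b (Suc k)}. (w i)\<^sup>2)" by (simp add: sum_nonneg)
      show "(t * h)\<^sup>2 \<le> (t * (\<Sum>i\<in>{b k..<b (Suc k)}. w i))\<^sup>2"
        using blocks[of k] h t by (intro power_mono mult_left_mono) auto
    qed (use h t in auto)
    finally show ?thesis by simp
  qed
  have "summable (\<lambda>k. \<Sum>i\<in>{b k..<b (Suc k)}. (w i)\<^sup>2)"
    by (rule summable_block_sums[OF _ w_sq b]) simp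
  then have "summable (\<lambda>k. measure (iid_space D) (Bad k))"
    by (rule summable_comparison_test'[where N=0, OF summable_mult[where c="2 * R\<^sup>2 / (t * h)\<^sup>2"]])
       (use bound in auto)
  then have "AE \<omega> in iid_space D. \<forall>\<^sub>F k in sequentially. \<omega> \<in> space (iid_space D) - Bad k"
    using Bad_sets by (intro borel_cantelli_AE1) (simp_all add: emeasure_eq_measure)
  then show ?thesis
  proof (rule eventually_mono)
    fix \<omega> assume "\<forall>\<^sub>F k in sequentially. \<omega> \<in> space (iid_space D) - Bad k"
    then show "\<forall>\<^sub>F k in sequentially. (\<Sum>i\<in>{b k..<b (Suc k)}. w i) * (measure_pmf.expectation D g - t)
        < (\<Sum>i\<in>{b k..<b (Suc k)}. w i * g (\<omega> i))"
      by (rule eventually_mono) (simp add: Bad_def not_le)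
  qed
qed

section \<open>Averaging recursions\<close>

lemma one_minus_sum_le_prod_one_minus:
  fixes x :: "'i \<Rightarrow> real"
  assumes "finite A" and "\<And>j. j \<in> A \<Longrightarrow> 0 \<le> x j \<and> x j \<le> 1"
  shows "1 - (\<Sum>j\<in>A. x j) \<le> (\<Prod>j\<in>A. 1 - x j)"
  using assms
proof (induction A rule: finite_induct)
  case (insert a A)
  have xa: "0 \<le> x a" "x a \<le> 1" and S: "0 \<le> (\<Sum>j\<in>A. x j)"
    using insert.prems by (auto intro: sum_nonneg)
  have "1 - (\<Sum>j\<in>insert a A. x j) \<le> (1 - x a) * (1 - (\<Sum>j\<in>A. x j))"
    using insert.hyps xa S by (simp add: algebra_simps)
  also have "\<dots> \<le> (1 - x a) * (\<Prod>j\<in>A. 1 - x j)"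
    using insert xa by (intro mult_left_mono) auto
  finally show ?case using insert.hyps by simp
qed simp

lemma prod_one_minus_le_exp:
  fixes x :: "'i \<Rightarrow> real"
  assumes "\<And>j. j \<in> A \<Longrightarrow> 0 \<le> x j \<and> x j \<le> 1"
  shows "(\<Prod>j\<in>A. 1 - x j) \<le> exp (- (\<Sum>j\<in>A. x j))"
proof -
  have "(\<Prod>j\<in>A. 1 - x j) \<le> (\<Prod>j\<in>A. exp (- x j))"
    using assms exp_ge_add_one_self by (intro prod_mono) (smt (verit))
  also have "\<dots> = exp (- (\<Sum>j\<in>A. x j))"
    by (cases "finite A") (simp_all add: exp_sum[symmetric] sum_negf)
  finally show ?thesis .
qed

lemma interval_recursion_lower_bound:
  fixes y U z :: "nat \<Rightarrow> real"
  assumes U: "\<And>j. j \<in> {s..<e} \<Longrightarrow> 0 \<le> U j \<and> U j \<le> 1"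
    and z: "\<And>j. j \<in> {s..<e} \<Longrightarrow> 0 \<le> z j"
    and step: "\<And>j. j \<in> {s..<e} \<Longrightarrow> (1 - U j) * y j + U j * z j \<le> y (Suc j)"
    and "s \<le> e"
  shows "(\<Prod>j\<in>{s..<e}. 1 - U j) * y s + (1 - (\<Sum>j\<in>{s..<e}. U j)) * (\<Sum>j\<in>{s..<e}. U j * z j) \<le> y e"
  using assms
proof (induction e)
  case (Suc e)
  show ?case
  proof (cases "s \<le> e")
    case False
    then show ?thesis using Suc.prems by (simp add: not_le le_Suc_eq)
  next
    case True
    define P where "P = (\<Prod>j\<in>{s..<e}. 1 - U j)"
    define L where "L = (\<Sum>j\<in>{s..<e}. U j)"
    define S where "S = (\<Sum>j\<in>{s..<e}. U j * z j)"
    have IH: "P * y s + (1 - L) * S \<le> y e"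
      unfolding P_def L_def S_def by (rule Suc.IH) (use Suc.prems True in auto)
    have u: "0 \<le> U e" "U e \<le> 1" and ze: "0 \<le> z e"
      and st: "(1 - U e) * y e + U e * z e \<le> y (Suc e)" using Suc.prems True by auto
    have S: "0 \<le> S" and L: "0 \<le> L" unfolding S_def L_def using Suc.prems by (auto intro!: sum_nonneg)
    have "(1 - L - U e) * S \<le> (1 - U e) * (1 - L) * S"
      using mult_nonneg_nonneg[OF mult_nonneg_nonneg[OF u(1) L] S] by (simp add: algebra_simps)
    moreover have "(1 - L - U e) * (U e * z e) \<le> U e * z e"
      using mult_right_mono[of "1 - L - U e" 1 "U e * z e"] L u ze by simp
    moreover have "(1 - U e) * (P * y s + (1 - L) * S) \<le> (1 - U e) * y e"
      using IH u by (intro mult_left_mono) auto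
    ultimately have "((1 - U e) * P) * y s + (1 - (L + U e)) * (S + U e * z e) \<le> y (Suc e)"
      using st by (simp add: algebra_simps)
    then show ?thesis
      using True by (simp add: P_def L_def S_def prod.atLeastLessThan_Suc sum.atLeastLessThan_Suc
          mult.commute)
  qed
qed simp

lemma interval_recursion_ge_start:
  fixes y U z :: "nat \<Rightarrow> real"
  assumes U: "\<And>j. j \<in> {s..<e} \<Longrightarrow> 0 \<le> U j \<and> U j \<le> 1"
    and z: "\<And>j. j \<in> {s..<e} \<Longrightarrow> 0 \<le> z j"
    and step: "\<And>j. j \<in> {s..<e} \<Longrightarrow> (1 - U j) * y j + U j * z j \<le> y (Suc j)"
    and y: "0 \<le> y s" and U_sum: "(\<Sum>j\<in>{s..<e}. U j) \<le> 1" and i: "s \<le> i" "i \<le> e"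
  shows "(1 - (\<Sum>j\<in>{s..<e}. U j)) * y s \<le> y i"
proof -
  have sub: "(\<Sum>j\<in>{s..<i}. U j) \<le> (\<Sum>j\<in>{s..<e}. U j)"
    using i U by (intro sum_mono2) auto
  then have "(1 - (\<Sum>j\<in>{s..<e}. U j)) * y s \<le> (\<Prod>j\<in>{s..<i}. 1 - U j) * y s"
    using one_minus_sum_le_prod_one_minus[of "{s..<i}" U] U i y by (intro mult_right_mono) auto
  also have "\<dots> \<le> (\<Prod>j\<in>{s..<i}. 1 - U j) * y s + (1 - (\<Sum>j\<in>{s..<i}. U j)) * (\<Sum>j\<in>{s..<i}. U j * z j)"
    using sub U_sum U z i by (intro add_increasing2 mult_nonneg_nonneg sum_nonneg) auto
  also have "\<dots> \<le> y i"
    using U z step i by (intro interval_recursion_lower_bound) auto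
  finally show ?thesis .
qed

lemma eventually_ge_of_contraction:
  fixes d P :: "nat \<Rightarrow> real"
  assumes step: "\<And>k. k \<ge> k0 \<Longrightarrow> P k * d k \<le> d (Suc k)"
    and P: "\<And>k. k \<ge> k0 \<Longrightarrow> 0 \<le> P k \<and> P k \<le> \<rho>" and "\<rho> < 1" and "\<gamma> > 0"
  shows "\<forall>\<^sub>F k in sequentially. - \<gamma> \<le> d k"
proof -
  have \<rho>: "0 \<le> \<rho>" using P[of k0] by auto
  have bound: "min 0 (\<rho> ^ j * d k0) \<le> d (k0 + j)" for j
  proof (induction j)
    case (Suc j)
    have st: "P (k0 + j) * d (k0 + j) \<le> d (k0 + Suc j)" and Pj: "0 \<le> P (k0 + j)" "P (k0 + j) \<le> \<rho>"
      using step[of "k0 + j"] P[of "k0 + j"] by auto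
    show ?case
    proof (cases "0 \<le> d (k0 + j)")
      case True
      then show ?thesis using st Pj by (smt (verit) mult_nonneg_nonneg)
    next
      case False
      then have "\<rho> * (\<rho> ^ j * d k0) \<le> \<rho> * d (k0 + j)" using Suc \<rho> by (intro mult_left_mono) auto
      also have "\<dots> \<le> P (k0 + j) * d (k0 + j)" using False Pj by (intro mult_right_mono_neg) auto
      finally show ?thesis using st by (simp add: mult.assoc)
    qed
  qed simp
  have "(\<lambda>j. \<rho> ^ j * d k0) \<longlonglongrightarrow> 0"
    by (intro tendsto_mult_left_zero LIMSEQ_power_zero) (use \<rho> assms(3) in auto)
  from tendstoD[OF this \<open>\<gamma> > 0\<close>]
  have "\<forall>\<^sub>F j in sequentially. \<bar>\<rho> ^ j * d k0\<bar> < \<gamma>" by (simp add: dist_real_def)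
  then obtain J where J: "\<And>j. j \<ge> J \<Longrightarrow> \<bar>\<rho> ^ j * d k0\<bar> < \<gamma>"
    unfolding eventually_sequentially by blast
  show ?thesis unfolding eventually_sequentially
  proof (intro exI allI impI)
    fix k assume "k0 + J \<le> k"
    then have "\<bar>\<rho> ^ (k - k0) * d k0\<bar> < \<gamma>" and "min 0 (\<rho> ^ (k - k0) * d k0) \<le> d k"
      using bound[of "k - k0"] J[of "k - k0"] by auto
    then show "- \<gamma> \<le> d k" by linarith
  qed
qed

lemma strict_mono_block_cover:
  fixes b :: "nat \<Rightarrow> nat"
  assumes b: "strict_mono b" and i: "b k0 \<le> i"
  obtains k where "k0 \<le> k" "b k \<le> i" "i < b (Suc k)"
proof -
  define m where "m = (LEAST k. i < b k)"
  have "i < b (Suc i)" using seq_suble[OF b, of "Suc i"] by simp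
  then have m: "i < b m" unfolding m_def by (rule LeastI)
  have below: "\<not> i < b k" if "k < m" for k
    using that not_less_Least unfolding m_def by blast
  have "k0 < m"
  proof (rule ccontr)
    assume "\<not> k0 < m"
    then have "b m \<le> b k0" using b by (simp add: strict_mono_less_eq)
    then show False using m i by simp
  qed
  then obtain k where k: "m = Suc k" "k0 \<le> k" by (cases m) auto
  show thesis using that[of k] k m below[of k] by simp
qed

lemma nonsummable_interval_sum_ge:
  fixes w :: "nat \<Rightarrow> real"
  assumes w: "\<And>i. 0 \<le> w i" "\<not> summable w"
  obtains e where "s < e" "B \<le> (\<Sum>i\<in>{s..<e}. w i)"
proof -
  obtain e where e: "max 0 B + (\<Sum>i<s. w i) < (\<Sum>i<e. w i)"
    using w summableI_nonneg_bounded[of w "max 0 B + (\<Sum>i<s. w i)"] by (meson not_le)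
  have "s < e"
  proof (rule ccontr)
    assume "\<not> s < e"
    then have "(\<Sum>i<e. w i) \<le> (\<Sum>i<s. w i)" by (intro sum_mono2) (use w in auto)
    then show False using e by linarith
  qed
  moreover have "(\<Sum>i\<in>{s..<e}. w i) = (\<Sum>i<e. w i) - (\<Sum>i<s. w i)"
    using sum_diff_nat_ivl[of 0 s e w] \<open>s < e\<close> by (simp add: atLeast0LessThan)
  ultimately show thesis using e that by simp
qed

text \<open>Since \<open>w\<close> tends to \<open>0\<close>, closing each block as soon as its weight reaches \<open>h\<close>
  overshoots by at most \<open>h\<close> once the block starts late enough.\<close>
lemma partition_into_blocks:
  fixes w :: "nat \<Rightarrow> real"
  assumes w: "\<And>i. 0 \<le> w i" "\<not> summable w" "w \<longlonglongrightarrow> 0" and h: "0 < h"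
  obtains b where "strict_mono b"
    and "\<And>k. h \<le> (\<Sum>i\<in>{b k..<b (Suc k)}. w i)" and "\<And>k. (\<Sum>i\<in>{b k..<b (Suc k)}. w i) \<le> 2 * h"
proof -
  from tendstoD[OF w(3) h] obtain N where "\<And>i. N \<le> i \<Longrightarrow> \<bar>w i\<bar> < h"
    unfolding eventually_sequentially dist_real_def by auto
  then have N: "\<And>i. N \<le> i \<Longrightarrow> w i \<le> h" by fastforce
  define next_end where "next_end s = (LEAST e. s < e \<and> h \<le> (\<Sum>i\<in>{s..<e}. w i))" for s
  have next_end: "s < next_end s \<and> h \<le> (\<Sum>i\<in>{s..<next_end s}. w i)" for s
    unfolding next_end_def by (rule LeastI_ex) (use nonsummable_interval_sum_ge[OF w(1,2), of s h] in blast)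
  have next_end_le: "(\<Sum>i\<in>{s..<next_end s}. w i) \<le> 2 * h" if "N \<le> s" for s
  proof -
    define e where "e = next_end s - 1"
    have e: "next_end s = Suc e" "s \<le> e" using next_end[of s] by (auto simp: e_def)
    have "(\<Sum>i\<in>{s..<e}. w i) < h"
    proof (cases "s < e")
      case True
      have "\<not> (s < e \<and> h \<le> (\<Sum>i\<in>{s..<e}. w i))"
        by (rule not_less_Least) (use e in \<open>simp add: next_end_def\<close>)
      then show ?thesis using True by simp
    qed (use e h in simp)
    moreover have "w e \<le> h" using N e that by simp
    ultimately show ?thesis using e by (simp add: sum.atLeastLessThan_Suc)
  qed
  define b where "b = rec_nat N (\<lambda>_. next_end)"
  have b_Suc: "b (Suc k) = next_end (b k)" for k by (simp add: b_def)
  have b: "strict_mono b" unfolding strict_mono_Suc_iff using next_end by (simp add: b_Suc)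
  show thesis
  proof (rule that[OF b])
    show "h \<le> (\<Sum>i\<in>{b k..<b (Suc k)}. w i)" for k using next_end[of "b k"] by (simp add: b_Suc)
    have "N \<le> b k" for k using strict_mono_less_eq[OF b, of 0 k] by (simp add: b_def)
    then show "(\<Sum>i\<in>{b k..<b (Suc k)}. w i) \<le> 2 * h" for k by (simp add: b_Suc next_end_le)
  qed
qed

lemma block_contraction:
  fixes y U z :: "nat \<Rightarrow> real"
  assumes U: "\<And>j. j \<in> {s..<e} \<Longrightarrow> 0 \<le> U j \<and> U j \<le> 1"
    and z: "\<And>j. j \<in> {s..<e} \<Longrightarrow> 0 \<le> z j"
    and step: "\<And>j. j \<in> {s..<e} \<Longrightarrow> (1 - U j) * y j + U j * z j \<le> y (Suc j)"
    and "s \<le> e" and U_sum: "(\<Sum>j\<in>{s..<e}. U j) \<le> 1"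
    and avg: "\<nu> * (\<Sum>j\<in>{s..<e}. U j) \<le> (\<Sum>j\<in>{s..<e}. U j * z j)"
    and target: "0 \<le> \<mu>" "\<mu> \<le> (1 - (\<Sum>j\<in>{s..<e}. U j)) * \<nu>"
  shows "(\<Prod>j\<in>{s..<e}. 1 - U j) * (y s - \<mu>) \<le> y e - \<mu>"
proof -
  define P where "P = (\<Prod>j\<in>{s..<e}. 1 - U j)"
  define L where "L = (\<Sum>j\<in>{s..<e}. U j)"
  have L: "0 \<le> L" unfolding L_def using U by (auto intro: sum_nonneg)
  have "1 - L \<le> P" unfolding P_def L_def by (rule one_minus_sum_le_prod_one_minus) (use U in auto)
  then have "\<mu> * (1 - P) \<le> \<mu> * L" using target(1) by (intro mult_left_mono) auto
  also have "\<dots> \<le> (1 - L) * \<nu> * L" using target(2) L by (intro mult_right_mono) (auto simp: L_def)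
  also have "\<dots> \<le> (1 - L) * (\<Sum>j\<in>{s..<e}. U j * z j)"
    using mult_left_mono[OF avg, of "1 - L"] U_sum by (simp add: L_def mult.commute mult.left_commute)
  finally have "\<mu> * (1 - P) \<le> (1 - L) * (\<Sum>j\<in>{s..<e}. U j * z j)" .
  moreover have "P * y s + (1 - L) * (\<Sum>j\<in>{s..<e}. U j * z j) \<le> y e"
    unfolding P_def L_def by (rule interval_recursion_lower_bound) (use assms in auto)
  ultimately show ?thesis by (simp add: P_def algebra_simps)
qed

text \<open>On each late block the distance of \<open>y\<close> below \<open>\<mu>\<close> shrinks by the factor \<open>exp (- \<theta>)\<close>,
  and inside a block \<open>y\<close> loses at most the fraction \<open>2 * h\<close> of its value at the block start.\<close>
lemma eventually_ge_of_block_averages: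
  fixes y U z :: "nat \<Rightarrow> real" and b :: "nat \<Rightarrow> nat"
  assumes U: "\<And>j. 0 \<le> U j \<and> U j \<le> 1" and z: "\<And>j. 0 \<le> z j" and y: "\<And>j. 0 \<le> y j"
    and step: "\<And>j. T \<le> j \<Longrightarrow> (1 - U j) * y j + U j * z j \<le> y (Suc j)"
    and b: "strict_mono b" and blocks: "\<And>k. (\<Sum>j\<in>{b k..<b (Suc k)}. U j) \<le> 2 * h" "2 * h \<le> 1"
    and mass: "\<forall>\<^sub>F k in sequentially. \<theta> \<le> (\<Sum>j\<in>{b k..<b (Suc k)}. U j)" "0 < \<theta>"
    and avg: "\<forall>\<^sub>F k in sequentially.
      \<nu> * (\<Sum>j\<in>{b k..<b (Suc k)}. U j) \<le> (\<Sum>j\<in>{b k..<b (Suc k)}. U j * z j)"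
    and target: "0 \<le> \<mu>" "0 \<le> \<nu>" "\<mu> \<le> (1 - 2 * h) * \<nu>" and \<gamma>: "0 < \<gamma>"
  shows "\<forall>\<^sub>F i in sequentially. (1 - 2 * h) * (\<mu> - \<gamma>) \<le> y i"
proof -
  define P where "P k = (\<Prod>j\<in>{b k..<b (Suc k)}. 1 - U j)" for k
  have b_le: "b k \<le> b (Suc k)" for k using b by (simp add: strict_mono_less_eq)
  obtain K0 where K0: "\<And>k. K0 \<le> k \<Longrightarrow> \<theta> \<le> (\<Sum>j\<in>{b k..<b (Suc k)}. U j) \<and>
      \<nu> * (\<Sum>j\<in>{b k..<b (Suc k)}. U j) \<le> (\<Sum>j\<in>{b k..<b (Suc k)}. U j * z j)"
    using eventually_conj[OF mass(1) avg] unfolding eventually_sequentially by blast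
  define K where "K = max K0 T"
  have K: "\<theta> \<le> (\<Sum>j\<in>{b k..<b (Suc k)}. U j) \<and>
      \<nu> * (\<Sum>j\<in>{b k..<b (Suc k)}. U j) \<le> (\<Sum>j\<in>{b k..<b (Suc k)}. U j * z j)" if "K \<le> k" for k
    using K0 that by (simp add: K_def)
  have "T \<le> K" by (simp add: K_def)
  then have late: "T \<le> b k" if "K \<le> k" for k using seq_suble[OF b, of k] that by linarith
  have contract: "P k * (y (b k) - \<mu>) \<le> y (b (Suc k)) - \<mu> \<and> 0 \<le> P k \<and> P k \<le> exp (- \<theta>)"
    if "K \<le> k" for k
  proof (intro conjI)
    have "\<mu> \<le> (1 - (\<Sum>j\<in>{b k..<b (Suc k)}. U j)) * \<nu>"
      using target blocks(1)[of k] by (smt (verit) mult_right_mono)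
    then show "P k * (y (b k) - \<mu>) \<le> y (b (Suc k)) - \<mu>"
      unfolding P_def using K[OF that] late[OF that] blocks(2) blocks(1)[of k] b_le U z target(1)
      by (intro block_contraction[where z=z] step) auto
    show "0 \<le> P k" unfolding P_def using U by (simp add: prod_nonneg)
    have "P k \<le> exp (- (\<Sum>j\<in>{b k..<b (Suc k)}. U j))" unfolding P_def by (rule prod_one_minus_le_exp) (use U in auto)
    then show "P k \<le> exp (- \<theta>)" using K[OF that] by (smt (verit) exp_le_cancel_iff)
  qed
  have "\<forall>\<^sub>F k in sequentially. - \<gamma> \<le> y (b k) - \<mu>"
    by (rule eventually_ge_of_contraction[of K]) (use contract mass(2) \<gamma> in auto)
  then obtain K1 where K1: "\<And>k. K1 \<le> k \<Longrightarrow> - \<gamma> \<le> y (b k) - \<mu>"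
    unfolding eventually_sequentially by blast
  define K' where "K' = max K1 K"
  have K': "\<mu> - \<gamma> \<le> y (b k)" if "K' \<le> k" for k using K1[of k] that by (simp add: K'_def)
  have "K \<le> K'" by (simp add: K'_def)
  show ?thesis unfolding eventually_sequentially
  proof (intro exI allI impI)
    fix i assume "b K' \<le> i"
    then obtain k where k: "K' \<le> k" "b k \<le> i" "i < b (Suc k)" by (rule strict_mono_block_cover[OF b])
    have "(1 - 2 * h) * y (b k) \<le> (1 - (\<Sum>j\<in>{b k..<b (Suc k)}. U j)) * y (b k)"
      using blocks(1)[of k] y by (intro mult_right_mono) auto
    also have "\<dots> \<le> y i"
      using U z y k late[of k] \<open>K \<le> K'\<close> blocks(1)[of k] blocks(2)
      by (intro interval_recursion_ge_start[where z=z] step) auto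
    finally show "(1 - 2 * h) * (\<mu> - \<gamma>) \<le> y i"
      using K'[OF k(1)] blocks(2) by (smt (verit) mult_left_mono)
  qed
qed

lemma AE_iid_block_averages:
  fixes D :: "'b pmf" and u z :: "'b \<Rightarrow> real" and w :: "nat \<Rightarrow> real" and b :: "nat \<Rightarrow> nat"
  assumes u: "\<And>x. 0 \<le> u x \<and> u x \<le> 1" and z: "\<And>x. 0 \<le> z x \<and> z x \<le> K"
    and w: "\<And>i. 0 \<le> w i" "summable (\<lambda>i. (w i)\<^sup>2)"
    and b: "strict_mono b" and blocks: "\<And>k. h \<le> (\<Sum>i\<in>{b k..<b (Suc k)}. w i)" and h: "0 < h"
    and Eu: "0 < measure_pmf.expectation D u"
    and \<nu>: "\<nu> * measure_pmf.expectation D u < measure_pmf.expectation D (\<lambda>x. u x * z x)"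
  shows "AE \<omega> in iid_space D.
      (\<forall>\<^sub>F k in sequentially. h * measure_pmf.expectation D u / 2 \<le> (\<Sum>i\<in>{b k..<b (Suc k)}. w i * u (\<omega> i)))
    \<and> (\<forall>\<^sub>F k in sequentially. \<nu> * (\<Sum>i\<in>{b k..<b (Suc k)}. w i * u (\<omega> i))
                               \<le> (\<Sum>i\<in>{b k..<b (Suc k)}. w i * u (\<omega> i) * z (\<omega> i)))"
proof -
  define pu where "pu = measure_pmf.expectation D u"
  define g where "g = (\<lambda>x. u x * (z x - \<nu>))"
  have uz: "\<bar>u x * z x\<bar> \<le> K" for x using mult_mono[of "u x" 1 "z x" K] u[of x] z[of x] by simp
  have "integrable (measure_pmf D) u" using u by (intro measure_pmf.integrable_const_bound[where B=1]) auto
  moreover have "integrable (measure_pmf D) (\<lambda>x. u x * z x)"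
    using uz by (intro measure_pmf.integrable_const_bound[where B=K]) auto
  ultimately have Eg: "measure_pmf.expectation D g = measure_pmf.expectation D (\<lambda>x. u x * z x) - \<nu> * pu"
    by (simp add: g_def pu_def algebra_simps)
  have "\<bar>g x\<bar> \<le> K + \<bar>\<nu>\<bar> + 1" for x
    using mult_mono[of "\<bar>u x\<bar>" 1 "\<bar>z x - \<nu>\<bar>" "K + \<bar>\<nu>\<bar> + 1"] u[of x] z[of x] by (auto simp: abs_mult g_def)
  then have "AE \<omega> in iid_space D. \<forall>\<^sub>F k in sequentially.
      (\<Sum>i\<in>{b k..<b (Suc k)}. w i) * (measure_pmf.expectation D g - measure_pmf.expectation D g)
        < (\<Sum>i\<in>{b k..<b (Suc k)}. w i * g (\<omega> i))"
    by (rule iid_block_sums_eventually_above[OF _ _ w b blocks h])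
      (use z[of undefined] \<nu> Eg in \<open>auto simp: pu_def\<close>)
  moreover have "AE \<omega> in iid_space D. \<forall>\<^sub>F k in sequentially.
      (\<Sum>i\<in>{b k..<b (Suc k)}. w i) * (pu - pu / 2) < (\<Sum>i\<in>{b k..<b (Suc k)}. w i * u (\<omega> i))"
    unfolding pu_def by (rule iid_block_sums_eventually_above[where R=1, OF _ _ w b blocks h])
      (use u Eu in \<open>auto simp: abs_le_iff\<close>)
  ultimately have "AE \<omega> in iid_space D.
      (\<forall>\<^sub>F k in sequentially. (\<Sum>i\<in>{b k..<b (Suc k)}. w i) * (measure_pmf.expectation D g - measure_pmf.expectation D g)
        < (\<Sum>i\<in>{b k..<b (Suc k)}. w i * g (\<omega> i)))
    \<and> (\<forall>\<^sub>F k in sequentially. (\<Sum>i\<in>{b k..<b (Suc k)}. w i) * (pu - pu / 2)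
        < (\<Sum>i\<in>{b k..<b (Suc k)}. w i * u (\<omega> i)))"
    by (rule AE_conjI)
  then show ?thesis
  proof (rule eventually_mono, elim conjE, intro conjI)
    fix \<omega>
    assume avg: "\<forall>\<^sub>F k in sequentially. (\<Sum>i\<in>{b k..<b (Suc k)}. w i)
        * (measure_pmf.expectation D g - measure_pmf.expectation D g) < (\<Sum>i\<in>{b k..<b (Suc k)}. w i * g (\<omega> i))"
      and mass: "\<forall>\<^sub>F k in sequentially. (\<Sum>i\<in>{b k..<b (Suc k)}. w i) * (pu - pu / 2)
        < (\<Sum>i\<in>{b k..<b (Suc k)}. w i * u (\<omega> i))"
    show "\<forall>\<^sub>F k in sequentially.
        h * measure_pmf.expectation D u / 2 \<le> (\<Sum>i\<in>{b k..<b (Suc k)}. w i * u (\<omega> i))"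
    proof (rule eventually_mono[OF mass])
      fix k
      have "h * (pu / 2) \<le> (\<Sum>i\<in>{b k..<b (Suc k)}. w i) * (pu / 2)"
        using blocks[of k] Eu by (intro mult_right_mono) (auto simp: pu_def)
      then show "(\<Sum>i\<in>{b k..<b (Suc k)}. w i) * (pu - pu / 2) < (\<Sum>i\<in>{b k..<b (Suc k)}. w i * u (\<omega> i))
          \<Longrightarrow> h * measure_pmf.expectation D u / 2 \<le> (\<Sum>i\<in>{b k..<b (Suc k)}. w i * u (\<omega> i))"
        by (simp add: pu_def)
    qed
    show "\<forall>\<^sub>F k in sequentially. \<nu> * (\<Sum>i\<in>{b k..<b (Suc k)}. w i * u (\<omega> i))
        \<le> (\<Sum>i\<in>{b k..<b (Suc k)}. w i * u (\<omega> i) * z (\<omega> i))"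
      using avg by (rule eventually_mono) (simp add: g_def sum_distrib_left sum_subtractf algebra_simps)
  qed
qed

lemma AE_iid_recursion_eventually_ge:
  fixes D :: "'b pmf" and u z :: "'b \<Rightarrow> real" and w :: "nat \<Rightarrow> real"
  assumes u: "\<And>x. 0 \<le> u x \<and> u x \<le> 1" and z: "\<And>x. 0 \<le> z x \<and> z x \<le> K"
    and w: "\<And>i. 0 \<le> w i \<and> w i \<le> 1" "\<not> summable w" "summable (\<lambda>i. (w i)\<^sup>2)"
    and Eu: "0 < measure_pmf.expectation D u" and \<epsilon>: "0 < \<epsilon>"
  shows "AE \<omega> in iid_space D. \<forall>y T. (\<forall>i. 0 \<le> y i) \<and>
      (\<forall>i\<ge>T. (1 - w i * u (\<omega> i)) * y i + w i * u (\<omega> i) * z (\<omega> i) \<le> y (Suc i)) \<longrightarrow>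
      (\<forall>\<^sub>F i in sequentially.
         measure_pmf.expectation D (\<lambda>x. u x * z x) / measure_pmf.expectation D u - \<epsilon> \<le> y i)"
proof -
  define pu where "pu = measure_pmf.expectation D u"
  define \<mu> where "\<mu> = measure_pmf.expectation D (\<lambda>x. u x * z x) / pu"
  have pu: "0 < pu" using Eu by (simp add: pu_def)
  show ?thesis
  proof (cases "\<mu> \<le> \<epsilon>")
    case True
    have "\<mu> - \<epsilon> \<le> y i" if "\<forall>i. 0 \<le> y i" for y :: "nat \<Rightarrow> real" and i
      using True that[rule_format, of i] by linarith
    then show ?thesis by (intro AE_I2 allI impI always_eventually) (auto simp: \<mu>_def pu_def)
  next
    case False
    text \<open>The block mass \<open>h\<close> is so small that losing the fraction \<open>2 * h\<close> of a value
      at most \<open>\<mu>\<close> costs at most \<open>\<epsilon> / 6\<close>.\<close>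
    define h where "h = min (1/2) (\<epsilon> / (12 * (\<mu> + 1)))"
    have h: "0 < h" "2 * h \<le> 1" using \<epsilon> False by (auto simp: h_def)
    have h\<mu>: "2 * h * \<mu> \<le> \<epsilon> / 6"
    proof -
      have "2 * h * \<mu> \<le> 2 * (\<epsilon> / (12 * (\<mu> + 1))) * \<mu>"
        using False \<epsilon> by (intro mult_right_mono) (auto simp: h_def)
      also have "\<dots> = \<epsilon> / 6 * (\<mu> / (\<mu> + 1))" using False \<epsilon> by (simp add: field_simps)
      also have "\<dots> \<le> \<epsilon> / 6" using False \<epsilon> by (simp add: divide_le_eq)
      finally show ?thesis .
    qed
    have "w \<longlonglongrightarrow> 0"
      using tendsto_real_sqrt[OF summable_LIMSEQ_zero[OF w(3)]] w(1) by (simp add: real_sqrt_abs)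
    then obtain b where b: "strict_mono b" and blocks: "\<And>k. h \<le> (\<Sum>i\<in>{b k..<b (Suc k)}. w i)"
      "\<And>k. (\<Sum>i\<in>{b k..<b (Suc k)}. w i) \<le> 2 * h"
      using partition_into_blocks[OF _ w(2) _ h(1)] w(1) by blast
    define \<nu> where "\<nu> = \<mu> - \<epsilon> / 3"
    have "\<nu> * pu < measure_pmf.expectation D (\<lambda>x. u x * z x)"
      using pu \<epsilon> by (simp add: \<nu>_def \<mu>_def pu_def algebra_simps)
    then have "AE \<omega> in iid_space D.
      (\<forall>\<^sub>F k in sequentially. h * pu / 2 \<le> (\<Sum>i\<in>{b k..<b (Suc k)}. w i * u (\<omega> i)))
    \<and> (\<forall>\<^sub>F k in sequentially. \<nu> * (\<Sum>i\<in>{b k..<b (Suc k)}. w i * u (\<omega> i))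
                               \<le> (\<Sum>i\<in>{b k..<b (Suc k)}. w i * u (\<omega> i) * z (\<omega> i)))"
      unfolding pu_def using w(1) by (intro AE_iid_block_averages[OF u z _ w(3) b blocks(1) h(1) Eu]) auto
    then show ?thesis
    proof (rule eventually_mono, intro allI impI, elim conjE)
      fix \<omega> and y :: "nat \<Rightarrow> real" and T
      assume mass: "\<forall>\<^sub>F k in sequentially. h * pu / 2 \<le> (\<Sum>i\<in>{b k..<b (Suc k)}. w i * u (\<omega> i))"
        and avg: "\<forall>\<^sub>F k in sequentially. \<nu> * (\<Sum>i\<in>{b k..<b (Suc k)}. w i * u (\<omega> i))
                               \<le> (\<Sum>i\<in>{b k..<b (Suc k)}. w i * u (\<omega> i) * z (\<omega> i))"
        and y: "\<forall>i. 0 \<le> y i"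
        and step: "\<forall>i\<ge>T. (1 - w i * u (\<omega> i)) * y i + w i * u (\<omega> i) * z (\<omega> i) \<le> y (Suc i)"
      have U: "0 \<le> w j * u (\<omega> j) \<and> w j * u (\<omega> j) \<le> w j" for j
        using mult_left_mono[of "u (\<omega> j)" 1 "w j"] u[of "\<omega> j"] w(1)[of j] by simp
      have "\<forall>\<^sub>F i in sequentially. (1 - 2 * h) * ((\<mu> - \<epsilon> / 2) - \<epsilon> / 6) \<le> y i"
      proof (rule eventually_ge_of_block_averages[where U="\<lambda>j. w j * u (\<omega> j)" and z="\<lambda>j. z (\<omega> j)"
            and \<theta>="h * pu / 2" and \<nu>=\<nu> and T=T])
        show "\<forall>\<^sub>F k in sequentially. h * pu / 2 \<le> (\<Sum>j\<in>{b k..<b (Suc k)}. w j * u (\<omega> j))" by (fact mass)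
        show "0 \<le> w j * u (\<omega> j) \<and> w j * u (\<omega> j) \<le> 1" for j using U[of j] w(1)[of j] by simp
        show "\<forall>\<^sub>F k in sequentially. \<nu> * (\<Sum>j\<in>{b k..<b (Suc k)}. w j * u (\<omega> j))
            \<le> (\<Sum>j\<in>{b k..<b (Suc k)}. w j * u (\<omega> j) * z (\<omega> j))" by (fact avg)
        show "(\<Sum>j\<in>{b k..<b (Suc k)}. w j * u (\<omega> j)) \<le> 2 * h" for k
          using sum_mono[of _ "\<lambda>j. w j * u (\<omega> j)" w] U blocks(2)[of k] by (meson order_trans)
        have "2 * h * \<nu> \<le> 2 * h * \<mu>" using h \<epsilon> by (intro mult_left_mono) (auto simp: \<nu>_def)
        then show "\<mu> - \<epsilon> / 2 \<le> (1 - 2 * h) * \<nu>" using h\<mu> by (simp add: \<nu>_def algebra_simps)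
      qed (use y step z U w(1) b False \<epsilon> h pu in \<open>auto simp: \<nu>_def intro: order_trans\<close>)
      moreover have "\<mu> - \<epsilon> \<le> (1 - 2 * h) * ((\<mu> - \<epsilon> / 2) - \<epsilon> / 6)"
      proof -
        have "2 * h * (\<mu> - 2 * \<epsilon> / 3) \<le> 2 * h * \<mu>" using h \<epsilon> by (intro mult_left_mono) auto
        moreover have "(1 - 2 * h) * ((\<mu> - \<epsilon> / 2) - \<epsilon> / 6) = \<mu> - 2 * \<epsilon> / 3 - 2 * h * (\<mu> - 2 * \<epsilon> / 3)"
          by (simp add: field_simps)
        ultimately show ?thesis using h\<mu> \<epsilon> by linarith
      qed
      ultimately show "\<forall>\<^sub>F i in sequentially.
          measure_pmf.expectation D (\<lambda>x. u x * z x) / measure_pmf.expectation D u - \<epsilon> \<le> y i"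
        by (auto elim!: eventually_mono simp: \<mu>_def pu_def)
    qed
  qed
qed

section \<open>Value iteration\<close>

definition vmin :: "('q \<Rightarrow> 'a set) \<Rightarrow> ('q \<Rightarrow> 'a \<Rightarrow> real) \<Rightarrow> 'q \<Rightarrow> real" where
  "vmin A v q = Min (v q ` A q)"

definition bellman :: "('q \<Rightarrow> 'a set) \<Rightarrow> ('q \<Rightarrow> 'a \<Rightarrow> 'q list pmf) \<Rightarrow> ('q \<Rightarrow> 'a \<Rightarrow> real)
    \<Rightarrow> ('q \<Rightarrow> 'a \<Rightarrow> real) \<Rightarrow> 'q \<Rightarrow> 'a \<Rightarrow> real" where
  "bellman A p c v q a = c q a + measure_pmf.expectation (p q a) (\<lambda>\<beta>. \<Sum>j<length \<beta>. vmin A v (\<beta> ! j))"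

definition value_iter :: "('q \<Rightarrow> 'a set) \<Rightarrow> ('q \<Rightarrow> 'a \<Rightarrow> 'q list pmf) \<Rightarrow> ('q \<Rightarrow> 'a \<Rightarrow> real)
    \<Rightarrow> nat \<Rightarrow> 'q \<Rightarrow> 'a \<Rightarrow> real" where
  "value_iter A p c n = (bellman A p c ^^ n) (\<lambda>_ _. 0)"

lemma value_iter_0: "value_iter A p c 0 = (\<lambda>_ _. 0)" by (simp add: value_iter_def)
lemma value_iter_Suc: "value_iter A p c (Suc n) = bellman A p c (value_iter A p c n)" by (simp add: value_iter_def)

lemma vmin_mono:
  fixes A :: "'q \<Rightarrow> 'a::finite set"
  assumes "A q \<noteq> {}" "\<And>a. a \<in> A q \<Longrightarrow> v q a \<le> w q a"
  shows "vmin A v q \<le> vmin A w q"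
  unfolding vmin_def using assms
  by (auto intro!: Min.boundedI simp: Min_le_iff finite)

lemma vmin_nonneg:
  fixes A :: "'q \<Rightarrow> 'a::finite set"
  assumes "A q \<noteq> {}" "\<And>a. a \<in> A q \<Longrightarrow> 0 \<le> v q a"
  shows "0 \<le> vmin A v q"
  unfolding vmin_def using assms by (auto intro!: Min.boundedI)

lemma vmin_le:
  fixes A :: "'q \<Rightarrow> 'a::finite set"
  assumes "a \<in> A q"
  shows "vmin A v q \<le> v q a"
  unfolding vmin_def using assms by (auto intro!: Min_le)

lemma Min_SUP_commute:
  fixes f :: "nat \<Rightarrow> 'a \<Rightarrow> ennreal"
  assumes S: "finite S" "S \<noteq> {}" and inc: "\<And>a. a \<in> S \<Longrightarrow> incseq (\<lambda>n. f n a)"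
  shows "Min ((\<lambda>a. SUP n. f n a) ` S) = (SUP n. Min ((\<lambda>a. f n a) ` S))"
proof (rule antisym)
  show "(SUP n. Min ((\<lambda>a. f n a) ` S)) \<le> Min ((\<lambda>a. SUP n. f n a) ` S)"
  proof (rule SUP_least)
    fix n
    show "Min ((\<lambda>a. f n a) ` S) \<le> Min ((\<lambda>a. SUP n. f n a) ` S)"
    proof (rule Min.boundedI)
      show "finite ((\<lambda>a. SUP n. f n a) ` S)" "(\<lambda>a. SUP n. f n a) ` S \<noteq> {}" using S by auto
      fix y assume "y \<in> (\<lambda>a. SUP n. f n a) ` S"
      then obtain a where a: "a \<in> S" "y = (SUP n. f n a)" by auto
      have "Min ((\<lambda>a. f n a) ` S) \<le> f n a" using S a by (intro Min_le) auto
      also have "\<dots> \<le> (SUP n. f n a)" by (rule SUP_upper) simp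
      finally show "Min ((\<lambda>a. f n a) ` S) \<le> y" using a by simp
    qed
  qed
next
  show "Min ((\<lambda>a. SUP n. f n a) ` S) \<le> (SUP n. Min ((\<lambda>a. f n a) ` S))"
  proof (rule dense_le)
    fix x assume x: "x < Min ((\<lambda>a. SUP n. f n a) ` S)"
    then have "\<forall>a\<in>S. \<exists>n. x < f n a" using S by (auto simp: Min_gr_iff less_SUP_iff)
    then obtain g where g: "\<And>a. a \<in> S \<Longrightarrow> x < f (g a) a" by metis
    define N where "N = Max (g ` S)"
    have "x < f N a" if a: "a \<in> S" for a
    proof -
      have "g a \<le> N" using S a by (simp add: N_def)
      then have "f (g a) a \<le> f N a" using inc[OF a] by (simp add: incseq_def)
      then show ?thesis using g[OF a] by simp
    qed
    then have "x < Min ((\<lambda>a. f N a) ` S)" using S by (simp add: Min_gr_iff)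
    also have "\<dots> \<le> (SUP n. Min ((\<lambda>a. f n a) ` S))" by (rule SUP_upper) simp
    finally show "x \<le> (SUP n. Min ((\<lambda>a. f n a) ` S))" by simp
  qed
qed

lemma sum_list_map_nth: "sum_list (map f xs) = (\<Sum>j<length xs. f (xs ! j))"
  using sum_list_sum_nth[of "map f xs"] by (simp add: atLeast0LessThan)

definition Qlim :: "('q \<Rightarrow> 'a set) \<Rightarrow> ('q \<Rightarrow> 'a \<Rightarrow> 'q list pmf) \<Rightarrow> ('q \<Rightarrow> 'a \<Rightarrow> real)
    \<Rightarrow> 'q \<Rightarrow> 'a \<Rightarrow> ennreal" where
  "Qlim A p c q a = (SUP n. ennreal (value_iter A p c n q a))"

definition Vlim :: "('q \<Rightarrow> 'a set) \<Rightarrow> ('q \<Rightarrow> 'a \<Rightarrow> 'q list pmf) \<Rightarrow> ('q \<Rightarrow> 'a \<Rightarrow> real) \<Rightarrow> 'q \<Rightarrow> ennreal" where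
  "Vlim A p c q = Min (Qlim A p c q ` A q)"

definition greedy_action :: "('q \<Rightarrow> 'a set) \<Rightarrow> ('q \<Rightarrow> 'a \<Rightarrow> 'q list pmf) \<Rightarrow> ('q \<Rightarrow> 'a \<Rightarrow> real) \<Rightarrow> 'q \<Rightarrow> 'a" where
  "greedy_action A p c q = (SOME a. a \<in> A q \<and> Qlim A p c q a = Vlim A p c q)"

definition greedy_strategy :: "('q \<Rightarrow> 'a set) \<Rightarrow> ('q \<Rightarrow> 'a \<Rightarrow> 'q list pmf) \<Rightarrow> ('q \<Rightarrow> 'a \<Rightarrow> real)
    \<Rightarrow> ('q,'a) strategy" where
  "greedy_strategy A p c h \<alpha> = return_pmf (0, greedy_action A p c (\<alpha> ! 0))"

context
  fixes A :: "'q::finite \<Rightarrow> 'a::finite set" and p :: "'q \<Rightarrow> 'a \<Rightarrow> 'q list pmf" and c :: "'q \<Rightarrow> 'a \<Rightarrow> real"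
  assumes bmdp: "is_bmdp A p c"
begin

lemma actions_nonempty: "A q \<noteq> {}" using bmdp by (simp add: is_bmdp_def)
lemma finite_transitions: "a \<in> A q \<Longrightarrow> finite (set_pmf (p q a))" using bmdp by (simp add: is_bmdp_def)
lemma cost_pos: "a \<in> A q \<Longrightarrow> c q a > 0" using bmdp by (simp add: is_bmdp_def)

lemma bellman_nonneg:
  assumes v: "\<And>q a. a \<in> A q \<Longrightarrow> 0 \<le> v q a" and a: "a \<in> A q"
  shows "0 \<le> bellman A p c v q a"
proof -
  have "0 \<le> measure_pmf.expectation (p q a) (\<lambda>\<beta>. \<Sum>j<length \<beta>. vmin A v (\<beta> ! j))"
    by (intro integral_nonneg_AE AE_I2 sum_nonneg vmin_nonneg actions_nonempty v)
  then show ?thesis using cost_pos[OF a] unfolding bellman_def by simp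
qed

lemma bellman_mono:
  assumes vw: "\<And>q a. a \<in> A q \<Longrightarrow> v q a \<le> w q a" and a: "a \<in> A q"
  shows "bellman A p c v q a \<le> bellman A p c w q a"
proof -
  have "measure_pmf.expectation (p q a) (\<lambda>\<beta>. \<Sum>j<length \<beta>. vmin A v (\<beta> ! j))
     \<le> measure_pmf.expectation (p q a) (\<lambda>\<beta>. \<Sum>j<length \<beta>. vmin A w (\<beta> ! j))"
    by (intro integral_mono integrable_measure_pmf_finite finite_transitions[OF a] sum_mono vmin_mono actions_nonempty vw)
  then show ?thesis unfolding bellman_def by simp
qed

lemma value_iter_nonneg: "a \<in> A q \<Longrightarrow> 0 \<le> value_iter A p c n q a"
proof (induction n arbitrary: q a)
  case 0 then show ?case by (simp add: value_iter_0)
next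
  case (Suc n) then show ?case by (simp add: value_iter_Suc bellman_nonneg)
qed

lemma value_iter_le_Suc: "a \<in> A q \<Longrightarrow> value_iter A p c n q a \<le> value_iter A p c (Suc n) q a"
proof (induction n arbitrary: q a)
  case 0 then show ?case using value_iter_nonneg[of a q 1] by (simp add: value_iter_0)
next
  case (Suc n)
  show ?case unfolding value_iter_Suc[of _ _ _ "Suc n"] value_iter_Suc[of _ _ _ n]
    by (rule bellman_mono) (use Suc in \<open>simp_all add: value_iter_Suc\<close>)
qed

lemma value_iter_mono: "a \<in> A q \<Longrightarrow> m \<le> n \<Longrightarrow> value_iter A p c m q a \<le> value_iter A p c n q a"
  using lift_Suc_mono_le[of "\<lambda>n. value_iter A p c n q a" m n] value_iter_le_Suc by blast

lemma incseq_vmin_value_iter: "incseq (\<lambda>n. vmin A (value_iter A p c n) q)"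
  unfolding incseq_def
  by (auto intro!: vmin_mono actions_nonempty value_iter_mono)

lemma vmin_value_iter_nonneg: "0 \<le> vmin A (value_iter A p c n) q"
  by (intro vmin_nonneg actions_nonempty value_iter_nonneg)

lemma Vlim_eq_SUP: "Vlim A p c q = (SUP n. ennreal (vmin A (value_iter A p c n) q))"
proof -
  have fin: "finite (A q)" "A q \<noteq> {}" using actions_nonempty by auto
  have "Vlim A p c q = Min ((\<lambda>a. SUP n. ennreal (value_iter A p c n q a)) ` A q)"
    by (simp add: Vlim_def Qlim_def)
  also have "\<dots> = (SUP n. Min ((\<lambda>a. ennreal (value_iter A p c n q a)) ` A q))"
    by (rule Min_SUP_commute[OF fin]) (auto simp: incseq_def intro!: ennreal_leI value_iter_mono)
  also have "\<dots> = (SUP n. ennreal (vmin A (value_iter A p c n) q))"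
  proof (rule SUP_cong[OF refl])
    fix n
    have "ennreal (Min (value_iter A p c n q ` A q)) = Min (ennreal ` (value_iter A p c n q ` A q))"
      by (rule mono_Min_commute) (use fin in \<open>auto simp: mono_def ennreal_leI\<close>)
    then show "Min ((\<lambda>a. ennreal (value_iter A p c n q a)) ` A q) = ennreal (vmin A (value_iter A p c n) q)"
      by (simp add: vmin_def image_image)
  qed
  finally show ?thesis .
qed

lemma ennreal_bellman_value_iter:
  assumes a: "a \<in> A q"
  shows "ennreal (bellman A p c (value_iter A p c n) q a) =
    ennreal (c q a) + (\<integral>\<^sup>+\<beta>. (\<Sum>j<length \<beta>. ennreal (vmin A (value_iter A p c n) (\<beta> ! j))) \<partial>measure_pmf (p q a))"
proof -
  define F where "F = (\<lambda>\<beta>. \<Sum>j<length \<beta>. vmin A (value_iter A p c n) (\<beta> ! j))"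
  have F0: "\<And>\<beta>. 0 \<le> F \<beta>" unfolding F_def by (intro sum_nonneg vmin_value_iter_nonneg)
  have "(\<integral>\<^sup>+\<beta>. ennreal (F \<beta>) \<partial>measure_pmf (p q a)) = ennreal (measure_pmf.expectation (p q a) F)"
    by (rule nn_integral_eq_integral) (use F0 integrable_measure_pmf_finite[OF finite_transitions[OF a]] in auto)
  moreover have "(\<Sum>j<length \<beta>. ennreal (vmin A (value_iter A p c n) (\<beta> ! j))) = ennreal (F \<beta>)" for \<beta>
    unfolding F_def by (rule sum_ennreal) (rule vmin_value_iter_nonneg)
  moreover have "0 \<le> measure_pmf.expectation (p q a) F" by (rule integral_nonneg_AE) (use F0 in auto)
  ultimately show ?thesis using cost_pos[OF a]
    by (simp add: bellman_def F_def[symmetric])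
qed

lemma bellman_Vlim_le_Qlim:
  assumes a: "a \<in> A q"
  shows "ennreal (c q a) + (\<integral>\<^sup>+\<beta>. (\<Sum>j<length \<beta>. Vlim A p c (\<beta> ! j)) \<partial>measure_pmf (p q a)) \<le> Qlim A p c q a"
proof -
  define X where "X = (\<lambda>n \<beta>. \<Sum>j<length \<beta>. ennreal (vmin A (value_iter A p c n) (\<beta> ! j)))"
  have incX: "incseq X"
    unfolding X_def incseq_def le_fun_def
    by (auto intro!: sum_mono ennreal_leI incseq_vmin_value_iter[THEN incseqD])
  have "(\<lambda>\<beta>. \<Sum>j<length \<beta>. Vlim A p c (\<beta> ! j)) = (\<lambda>\<beta>. SUP n. X n \<beta>)"
  proof
    fix \<beta> :: "'q list"
    have "(\<Sum>j<length \<beta>. Vlim A p c (\<beta> ! j)) = (\<Sum>j<length \<beta>. SUP n. ennreal (vmin A (value_iter A p c n) (\<beta> ! j)))"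
      by (simp add: Vlim_eq_SUP)
    also have "\<dots> = (SUP n. X n \<beta>)" unfolding X_def
      by (rule ennreal_SUP_sum[symmetric])
         (auto simp: incseq_def intro!: ennreal_leI incseq_vmin_value_iter[THEN incseqD])
    finally show "(\<Sum>j<length \<beta>. Vlim A p c (\<beta> ! j)) = (SUP n. X n \<beta>)" .
  qed
  then have "(\<integral>\<^sup>+\<beta>. (\<Sum>j<length \<beta>. Vlim A p c (\<beta> ! j)) \<partial>measure_pmf (p q a)) =
      (SUP n. \<integral>\<^sup>+\<beta>. X n \<beta> \<partial>measure_pmf (p q a))"
    using nn_integral_monotone_convergence_SUP[OF incX, of "measure_pmf (p q a)"] by simp
  then have "ennreal (c q a) + (\<integral>\<^sup>+\<beta>. (\<Sum>j<length \<beta>. Vlim A p c (\<beta> ! j)) \<partial>measure_pmf (p q a)) =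
      (SUP n. ennreal (c q a) + \<integral>\<^sup>+\<beta>. X n \<beta> \<partial>measure_pmf (p q a))"
    by (simp add: ennreal_SUP_add_right)
  also have "\<dots> = (SUP n. ennreal (value_iter A p c (Suc n) q a))"
    by (simp add: value_iter_Suc ennreal_bellman_value_iter[OF a] X_def)
  also have "\<dots> \<le> Qlim A p c q a" unfolding Qlim_def
    by (rule SUP_least) (rule SUP_upper, simp)
  finally show ?thesis .
qed

lemma greedy_action: "greedy_action A p c q \<in> A q \<and> Qlim A p c q (greedy_action A p c q) = Vlim A p c q"
proof -
  have "Vlim A p c q \<in> Qlim A p c q ` A q" unfolding Vlim_def
    by (rule Min_in) (use actions_nonempty in auto)
  then have "\<exists>a. a \<in> A q \<and> Qlim A p c q a = Vlim A p c q" by auto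
  then show ?thesis unfolding greedy_action_def by (rule someI_ex)
qed

lemma greedy_strategy_in_strategies: "greedy_strategy A p c \<in> strategies A"
  unfolding strategies_def greedy_strategy_def using greedy_action by auto

lemma ncost_greedy_strategy_le: "ncost p c (greedy_strategy A p c) n h \<alpha> \<le> sum_list (map (Vlim A p c) \<alpha>)"
proof (induction n arbitrary: h \<alpha>)
  case 0 then show ?case by simp
next
  case (Suc n)
  show ?case
  proof (cases "\<alpha> = []")
    case True then show ?thesis by simp
  next
    case False
    define q where "q = \<alpha> ! 0"
    define a where "a = greedy_action A p c q"
    have a: "a \<in> A q" "Qlim A p c q a = Vlim A p c q" using greedy_action[of q] by (auto simp: a_def)
    have \<alpha>eq: "\<alpha> = q # tl \<alpha>" using False by (cases \<alpha>) (auto simp: q_def)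
    have rep: "replace_at \<alpha> 0 \<beta> = \<beta> @ tl \<alpha>" for \<beta> by (simp add: replace_at_def drop_Suc)
    define R where "R = sum_list (map (Vlim A p c) (tl \<alpha>))"
    have "ncost p c (greedy_strategy A p c) (Suc n) h \<alpha> = ennreal (c q a) +
        (\<integral>\<^sup>+\<beta>. ncost p c (greedy_strategy A p c) n (h @ [(\<alpha>, (0, a))]) (\<beta> @ tl \<alpha>) \<partial>measure_pmf (p q a))"
      using False by (simp add: greedy_strategy_def q_def a_def rep)
    also have "\<dots> \<le> ennreal (c q a) + (\<integral>\<^sup>+\<beta>. (sum_list (map (Vlim A p c) \<beta>) + R) \<partial>measure_pmf (p q a))"
    proof (intro add_left_mono nn_integral_mono)
      fix \<beta> :: "'q list"
      show "ncost p c (greedy_strategy A p c) n (h @ [(\<alpha>, (0, a))]) (\<beta> @ tl \<alpha>) \<le> sum_list (map (Vlim A p c) \<beta>) + R"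
        using Suc.IH[of "h @ [(\<alpha>, (0, a))]" "\<beta> @ tl \<alpha>"] by (simp add: R_def)
    qed
    also have "(\<integral>\<^sup>+\<beta>. (sum_list (map (Vlim A p c) \<beta>) + R) \<partial>measure_pmf (p q a)) =
        (\<integral>\<^sup>+\<beta>. sum_list (map (Vlim A p c) \<beta>) \<partial>measure_pmf (p q a)) + R"
      by (subst nn_integral_add) (simp_all add: measure_pmf.emeasure_space_1)
    also have "ennreal (c q a) + ((\<integral>\<^sup>+\<beta>. sum_list (map (Vlim A p c) \<beta>) \<partial>measure_pmf (p q a)) + R)
        = (ennreal (c q a) + (\<integral>\<^sup>+\<beta>. (\<Sum>j<length \<beta>. Vlim A p c (\<beta> ! j)) \<partial>measure_pmf (p q a))) + R"
      by (simp add: sum_list_map_nth add.assoc)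
    also have "\<dots> \<le> Qlim A p c q a + R"
      by (intro add_right_mono bellman_Vlim_le_Qlim[OF a(1)])
    also have "\<dots> = sum_list (map (Vlim A p c) \<alpha>)"
      using a(2) by (subst \<alpha>eq) (simp add: R_def)
    finally show ?thesis .
  qed
qed

lemma cstar_le_Vlim: "cstar A p c q \<le> Vlim A p c q"
proof -
  have "cstar A p c q \<le> total_cost p c (greedy_strategy A p c) [q]"
    unfolding cstar_def by (rule INF_lower[OF greedy_strategy_in_strategies])
  also have "\<dots> \<le> Vlim A p c q"
    unfolding total_cost_def by (rule SUP_least) (use ncost_greedy_strategy_le[of _ "[]" "[q]"] in simp)
  finally show ?thesis .
qed

lemma Qstar_le_Qlim: "a \<in> A q \<Longrightarrow> Qstar A p c q a \<le> Qlim A p c q a"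
  unfolding Qstar_def
  by (rule order_trans[OF _ bellman_Vlim_le_Qlim])
     (auto intro!: add_left_mono nn_integral_mono sum_mono cstar_le_Vlim)

lemma value_iter_unbounded:
  assumes a: "a \<in> A q" and inf: "Qstar A p c q a = \<infinity>"
  shows "\<exists>n. value_iter A p c n q a > B"
proof (rule ccontr)
  assume "\<not> ?thesis"
  then have "\<And>n. value_iter A p c n q a \<le> B" by (simp add: not_less)
  then have "Qlim A p c q a \<le> ennreal B" unfolding Qlim_def by (intro SUP_least ennreal_leI) auto
  then have "Qstar A p c q a \<le> ennreal B" using Qstar_le_Qlim[OF a] by simp
  then have "(\<infinity>::ennreal) \<le> ennreal B" using inf by simp
  then show False by (simp add: top_unique)
qed

end

section \<open>Q-learning\<close>

lemma qlearn_Suc_apply: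
  "qlearn A c lr Q0 \<omega> (Suc i) q a =
    (if fst (\<omega> i) = (q, a) then
       (1 - lr i) * qlearn A c lr Q0 \<omega> i q a
         + lr i * (c q a + (\<Sum>j<length (snd (\<omega> i)). vmin A (qlearn A c lr Q0 \<omega> i) (snd (\<omega> i) ! j)))
     else qlearn A c lr Q0 \<omega> i q a)"
  by (cases "\<omega> i") (auto simp: Let_def vmin_def)

text \<open>Tolerances \<open>1 / (m + 1)\<close> instead of all \<open>\<epsilon> > 0\<close> keep the quantifier countable, so that
  it commutes with \<open>AE\<close>.\<close>
definition tracks_value_iter :: "('q \<Rightarrow> 'a set) \<Rightarrow> ('q \<Rightarrow> 'a \<Rightarrow> 'q list pmf) \<Rightarrow> ('q \<Rightarrow> 'a \<Rightarrow> real)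
    \<Rightarrow> (nat \<Rightarrow> real) \<Rightarrow> ('q \<Rightarrow> 'a \<Rightarrow> real) \<Rightarrow> nat \<Rightarrow> (nat \<Rightarrow> ('q \<times> 'a) \<times> 'q list) \<Rightarrow> bool" where
  "tracks_value_iter A p c lr Q0 n \<omega> \<longleftrightarrow> (\<forall>q a. a \<in> A q \<longrightarrow> (\<forall>m::nat. \<forall>\<^sub>F i in sequentially.
     value_iter A p c n q a - 1 / real (Suc m) \<le> qlearn A c lr Q0 \<omega> i q a))"

context
  fixes A :: "'q::finite \<Rightarrow> 'a::finite set"
    and p :: "'q \<Rightarrow> 'a \<Rightarrow> 'q list pmf"
    and c :: "'q \<Rightarrow> 'a \<Rightarrow> real"
    and lr :: "nat \<Rightarrow> real"
    and sel :: "('q \<times> 'a) pmf"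
    and Q0 :: "'q \<Rightarrow> 'a \<Rightarrow> real"
  assumes bmdp: "is_bmdp A p c"
    and lr_range: "\<And>i. 0 \<le> lr i \<and> lr i \<le> 1"
    and lr_sum: "\<not> summable lr"
    and lr_sq: "summable (\<lambda>i. (lr i)\<^sup>2)"
    and sel_support: "set_pmf sel \<subseteq> {(q, a). a \<in> A q}"
    and sel_pos: "\<And>q a. a \<in> A q \<Longrightarrow> 0 < pmf sel (q, a)"
    and Q0_nonneg: "\<And>q a. a \<in> A q \<Longrightarrow> 0 \<le> Q0 q a"
begin

lemma qlearn_nonneg: "a \<in> A q \<Longrightarrow> 0 \<le> qlearn A c lr Q0 \<omega> i q a"
proof (induction i arbitrary: q a)
  case (Suc i)
  have "0 \<le> vmin A (qlearn A c lr Q0 \<omega> i) q'" for q'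
    using Suc.IH by (intro vmin_nonneg actions_nonempty[OF bmdp])
  then have "0 \<le> c q a + (\<Sum>j<length (snd (\<omega> i)). vmin A (qlearn A c lr Q0 \<omega> i) (snd (\<omega> i) ! j))"
    using cost_pos[OF bmdp Suc.prems] by (intro add_nonneg_nonneg sum_nonneg) auto
  then show ?case
    unfolding qlearn_Suc_apply using Suc.IH[OF Suc.prems] lr_range[of i] by simp
qed (use Q0_nonneg in simp)

lemma qlearn_Suc_ge:
  assumes close: "\<And>q a. a \<in> A q \<Longrightarrow> v q a - \<delta> \<le> qlearn A c lr Q0 \<omega> i q a"
    and a0: "a0 \<in> A q0"
  shows "(1 - lr i * of_bool (fst (\<omega> i) = (q0, a0))) * qlearn A c lr Q0 \<omega> i q0 a0
      + lr i * of_bool (fst (\<omega> i) = (q0, a0))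
        * max 0 (c q0 a0 + (\<Sum>j<length (snd (\<omega> i)). vmin A v (snd (\<omega> i) ! j)) - \<delta> * length (snd (\<omega> i)))
    \<le> qlearn A c lr Q0 \<omega> (Suc i) q0 a0"
proof (cases "fst (\<omega> i) = (q0, a0)")
  case True
  define Q where "Q = qlearn A c lr Q0 \<omega> i"
  define \<beta> where "\<beta> = snd (\<omega> i)"
  have "vmin A v q - \<delta> \<le> vmin A Q q" for q
  proof -
    have "vmin A Q q \<in> Q q ` A q"
      unfolding vmin_def using actions_nonempty[OF bmdp, of q] by (intro Min_in) auto
    then obtain a where a: "a \<in> A q" "vmin A Q q = Q q a" by auto
    then show ?thesis using close[OF a(1)] vmin_le[of a A q v, OF a(1)] by (simp add: Q_def)
  qed
  then have "c q0 a0 + (\<Sum>j<length \<beta>. vmin A v (\<beta> ! j)) - \<delta> * length \<beta> \<le> c q0 a0 + (\<Sum>j<length \<beta>. vmin A Q (\<beta> ! j))"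
    using sum_mono[of "{..<length \<beta>}" "\<lambda>j. vmin A v (\<beta> ! j) - \<delta>" "\<lambda>j. vmin A Q (\<beta> ! j)"]
    by (simp add: sum_subtractf mult.commute)
  moreover have "0 \<le> c q0 a0 + (\<Sum>j<length \<beta>. vmin A Q (\<beta> ! j))"
    using cost_pos[OF bmdp a0] qlearn_nonneg
    by (intro add_nonneg_nonneg sum_nonneg vmin_nonneg actions_nonempty[OF bmdp]) (auto simp: Q_def)
  ultimately show ?thesis
    using True lr_range[of i] unfolding qlearn_Suc_apply by (simp add: Q_def \<beta>_def mult_left_mono)
qed (unfold qlearn_Suc_apply, simp)

lemma expectation_sample_pmf_indicator:
  fixes w :: "('q \<times> 'a) \<times> 'q list \<Rightarrow> real"
  assumes "a0 \<in> A q0"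
  shows "measure_pmf.expectation (sample_pmf p sel) (\<lambda>y. of_bool (fst y = (q0, a0)) * w y)
       = pmf sel (q0, a0) * measure_pmf.expectation (p q0 a0) (\<lambda>\<beta>. w ((q0, a0), \<beta>))"
proof -
  define E where "E = {(q, a). a \<in> A q}"
  define f where "f qa = map_pmf (\<lambda>\<beta>. (qa, \<beta>)) (p (fst qa) (snd qa))" for qa
  have "measure_pmf.expectation (sample_pmf p sel) (\<lambda>y. of_bool (fst y = (q0, a0)) * w y)
     = (\<Sum>x\<in>E. pmf sel x *\<^sub>R measure_pmf.expectation (f x) (\<lambda>y. of_bool (fst y = (q0, a0)) * w y))"
    unfolding sample_pmf_def f_def[symmetric]
  proof (rule pmf_expectation_bind)
    show "finite E" and "set_pmf sel \<subseteq> E" using sel_support by (simp_all add: E_def)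
    show "finite (set_pmf (f x))" if "x \<in> E" for x
      using that finite_transitions[OF bmdp] by (auto simp: E_def f_def)
  qed
  also have "\<dots> = (\<Sum>x\<in>E. if x = (q0, a0) then pmf sel (q0, a0) * measure_pmf.expectation (p q0 a0) (\<lambda>\<beta>. w ((q0, a0), \<beta>)) else 0)"
    by (intro sum.cong refl) (auto simp: f_def)
  also have "\<dots> = pmf sel (q0, a0) * measure_pmf.expectation (p q0 a0) (\<lambda>\<beta>. w ((q0, a0), \<beta>))"
    using assms by (simp add: E_def)
  finally show ?thesis .
qed

lemma eventually_qlearn_recursion:
  fixes \<delta> :: real
  assumes tracks: "tracks_value_iter A p c lr Q0 n \<omega>" and a0: "a0 \<in> A q0" and \<delta>: "0 < \<delta>"
  shows "\<forall>\<^sub>F i in sequentially.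
    (1 - lr i * of_bool (fst (\<omega> i) = (q0, a0))) * qlearn A c lr Q0 \<omega> i q0 a0
      + lr i * of_bool (fst (\<omega> i) = (q0, a0)) * max 0 (c q0 a0
        + (\<Sum>j<length (snd (\<omega> i)). vmin A (value_iter A p c n) (snd (\<omega> i) ! j)) - \<delta> * length (snd (\<omega> i)))
    \<le> qlearn A c lr Q0 \<omega> (Suc i) q0 a0" (is "\<forall>\<^sub>F i in sequentially. ?recursion i")
proof -
  obtain m where m: "1 / real (Suc m) < \<delta>"
    using reals_Archimedean[OF \<delta>] by (auto simp: inverse_eq_divide)
  have "\<forall>\<^sub>F i in sequentially. \<forall>x\<in>{(q, a). a \<in> A q}.
      value_iter A p c n (fst x) (snd x) - 1 / real (Suc m) \<le> qlearn A c lr Q0 \<omega> i (fst x) (snd x)"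
    using tracks by (intro eventually_ball_finite) (auto simp: tracks_value_iter_def)
  then show ?thesis
  proof (rule eventually_mono)
    fix i
    assume "\<forall>x\<in>{(q, a). a \<in> A q}.
      value_iter A p c n (fst x) (snd x) - 1 / real (Suc m) \<le> qlearn A c lr Q0 \<omega> i (fst x) (snd x)"
    then have "value_iter A p c n q a - \<delta> \<le> qlearn A c lr Q0 \<omega> i q a" if "a \<in> A q" for q a
      using that m by fastforce
    then show "?recursion i" by (rule qlearn_Suc_ge[OF _ a0])
  qed
qed

text \<open>Restricting to the finite support of \<open>p q0 a0\<close> makes the target bounded.\<close>
lemma bellman_le_expectation_target:
  fixes \<delta> :: real
  assumes a0: "a0 \<in> A q0" and \<delta>: "0 \<le> \<delta>"
  shows "bellman A p c v q0 a0 - \<delta> * measure_pmf.expectation (p q0 a0) (\<lambda>\<beta>. real (length \<beta>))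
    \<le> measure_pmf.expectation (p q0 a0) (\<lambda>\<beta>. if \<beta> \<in> set_pmf (p q0 a0)
         then max 0 (c q0 a0 + (\<Sum>j<length \<beta>. vmin A v (\<beta> ! j)) - \<delta> * length \<beta>) else 0)"
proof -
  have int: "integrable (measure_pmf (p q0 a0)) f" for f :: "'q list \<Rightarrow> real"
    using finite_transitions[OF bmdp a0] by (rule integrable_measure_pmf_finite)
  have "bellman A p c v q0 a0 - \<delta> * measure_pmf.expectation (p q0 a0) (\<lambda>\<beta>. real (length \<beta>))
      = measure_pmf.expectation (p q0 a0) (\<lambda>\<beta>. c q0 a0 + (\<Sum>j<length \<beta>. vmin A v (\<beta> ! j)) - \<delta> * length \<beta>)"
    by (simp add: bellman_def int measure_pmf.prob_space)
  also have "\<dots> \<le> measure_pmf.expectation (p q0 a0) (\<lambda>\<beta>. if \<beta> \<in> set_pmf (p q0 a0)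
         then max 0 (c q0 a0 + (\<Sum>j<length \<beta>. vmin A v (\<beta> ! j)) - \<delta> * length \<beta>) else 0)"
    by (rule integral_mono_AE[OF int int]) (auto simp: AE_measure_pmf_iff)
  finally show ?thesis .
qed

lemma AE_eventually_value_iter_Suc_le_qlearn:
  assumes tracks: "AE \<omega> in sample_space p sel. tracks_value_iter A p c lr Q0 n \<omega>"
    and a0: "a0 \<in> A q0" and \<epsilon>: "0 < \<epsilon>"
  shows "AE \<omega> in sample_space p sel. \<forall>\<^sub>F i in sequentially.
           value_iter A p c (Suc n) q0 a0 - \<epsilon> \<le> qlearn A c lr Q0 \<omega> i q0 a0"
proof -
  define D where "D = sample_pmf p sel"
  define Lb where "Lb = measure_pmf.expectation (p q0 a0) (\<lambda>\<beta>. real (length \<beta>))"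
  define \<delta> where "\<delta> = \<epsilon> / (2 * (Lb + 1))"
  have "0 \<le> Lb" unfolding Lb_def by (rule integral_nonneg_AE) auto
  then have \<delta>: "0 < \<delta>" "\<delta> * Lb \<le> \<epsilon> / 2" using \<epsilon> by (auto simp: \<delta>_def field_simps)
  define G where "G = (\<lambda>\<beta>. c q0 a0 + (\<Sum>j<length \<beta>. vmin A (value_iter A p c n) (\<beta> ! j)) - \<delta> * length \<beta>)"
  define u :: "('q \<times> 'a) \<times> 'q list \<Rightarrow> real" where "u = (\<lambda>y. of_bool (fst y = (q0, a0)))"
  define z where "z y = (if snd y \<in> set_pmf (p q0 a0) then max 0 (G (snd y)) else 0)" for y :: "('q \<times> 'a) \<times> 'q list"
  define K where "K = (\<Sum>\<beta>\<in>set_pmf (p q0 a0). max 0 (G \<beta>))"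
  have "max 0 (G \<beta>) \<le> K" if "\<beta> \<in> set_pmf (p q0 a0)" for \<beta>
    unfolding K_def using that finite_transitions[OF bmdp a0] by (intro member_le_sum) auto
  then have z: "0 \<le> z y \<and> z y \<le> K" for y
    using finite_transitions[OF bmdp a0] by (auto simp: z_def K_def intro: sum_nonneg)
  have Eu: "measure_pmf.expectation D u = pmf sel (q0, a0)"
    using expectation_sample_pmf_indicator[OF a0, of "\<lambda>_. 1"] by (simp add: D_def u_def)
  have "(\<lambda>\<beta>. z ((q0, a0), \<beta>)) = (\<lambda>\<beta>. if \<beta> \<in> set_pmf (p q0 a0) then max 0 (c q0 a0
      + (\<Sum>j<length \<beta>. vmin A (value_iter A p c n) (\<beta> ! j)) - \<delta> * length \<beta>) else 0)"
    unfolding z_def G_def by (auto simp: fun_eq_iff)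
  then have "value_iter A p c (Suc n) q0 a0 - \<epsilon> / 2 \<le> measure_pmf.expectation (p q0 a0) (\<lambda>\<beta>. z ((q0, a0), \<beta>))"
    using bellman_le_expectation_target[OF a0 less_imp_le[OF \<delta>(1)], of "value_iter A p c n"] \<delta>(2)
    by (simp add: value_iter_Suc Lb_def)
  also have "\<dots> = measure_pmf.expectation D (\<lambda>y. u y * z y) / measure_pmf.expectation D u"
    using expectation_sample_pmf_indicator[OF a0, of z] sel_pos[OF a0] Eu by (simp add: D_def u_def)
  finally have mean: "value_iter A p c (Suc n) q0 a0 - \<epsilon> / 2
      \<le> measure_pmf.expectation D (\<lambda>y. u y * z y) / measure_pmf.expectation D u" .
  have "AE \<omega> in sample_space p sel. \<forall>y T. (\<forall>i. 0 \<le> y i) \<and>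
      (\<forall>i\<ge>T. (1 - lr i * u (\<omega> i)) * y i + lr i * u (\<omega> i) * z (\<omega> i) \<le> y (Suc i)) \<longrightarrow>
      (\<forall>\<^sub>F i in sequentially.
         measure_pmf.expectation D (\<lambda>y. u y * z y) / measure_pmf.expectation D u - \<epsilon> / 2 \<le> y i)"
    unfolding sample_space_def D_def[symmetric]
    by (rule AE_iid_recursion_eventually_ge[where K=K])
      (use z lr_range lr_sum lr_sq Eu sel_pos[OF a0] \<epsilon> in \<open>auto simp: u_def\<close>)
  with tracks have "AE \<omega> in sample_space p sel. tracks_value_iter A p c lr Q0 n \<omega> \<and> (\<forall>y T. (\<forall>i. 0 \<le> y i) \<and>
      (\<forall>i\<ge>T. (1 - lr i * u (\<omega> i)) * y i + lr i * u (\<omega> i) * z (\<omega> i) \<le> y (Suc i)) \<longrightarrow>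
      (\<forall>\<^sub>F i in sequentially.
         measure_pmf.expectation D (\<lambda>y. u y * z y) / measure_pmf.expectation D u - \<epsilon> / 2 \<le> y i))"
    by (rule AE_conjI)
  then show ?thesis
  proof (rule eventually_mono, elim conjE)
    fix \<omega> assume tracks: "tracks_value_iter A p c lr Q0 n \<omega>"
      and converges: "\<forall>y T. (\<forall>i. 0 \<le> y i) \<and>
        (\<forall>i\<ge>T. (1 - lr i * u (\<omega> i)) * y i + lr i * u (\<omega> i) * z (\<omega> i) \<le> y (Suc i)) \<longrightarrow>
        (\<forall>\<^sub>F i in sequentially.
           measure_pmf.expectation D (\<lambda>y. u y * z y) / measure_pmf.expectation D u - \<epsilon> / 2 \<le> y i)"
    define Q where "Q = qlearn A c lr Q0 \<omega>"
    obtain T where T: "\<And>i. T \<le> i \<Longrightarrow> (1 - lr i * u (\<omega> i)) * Q i q0 a0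
        + lr i * u (\<omega> i) * max 0 (G (snd (\<omega> i))) \<le> Q (Suc i) q0 a0"
      using eventually_qlearn_recursion[OF tracks a0 \<delta>(1)]
      unfolding eventually_sequentially Q_def u_def G_def by blast
    have "(1 - lr i * u (\<omega> i)) * Q i q0 a0 + lr i * u (\<omega> i) * z (\<omega> i) \<le> Q (Suc i) q0 a0" if "T \<le> i" for i
    proof -
      have "lr i * u (\<omega> i) * z (\<omega> i) \<le> lr i * u (\<omega> i) * max 0 (G (snd (\<omega> i)))"
        using lr_range[of i] by (intro mult_left_mono) (auto simp: z_def u_def)
      then show ?thesis using T[OF that] by linarith
    qed
    moreover have "0 \<le> Q i q0 a0" for i unfolding Q_def by (rule qlearn_nonneg[OF a0])
    ultimately have "\<forall>\<^sub>F i in sequentially.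
        measure_pmf.expectation D (\<lambda>y. u y * z y) / measure_pmf.expectation D u - \<epsilon> / 2 \<le> Q i q0 a0"
      by (intro converges[rule_format, of "\<lambda>i. Q i q0 a0" T] conjI allI impI) auto
    then show "\<forall>\<^sub>F i in sequentially. value_iter A p c (Suc n) q0 a0 - \<epsilon> \<le> qlearn A c lr Q0 \<omega> i q0 a0"
      by (rule eventually_mono) (use mean in \<open>simp add: Q_def\<close>)
  qed
qed

lemma AE_tracks_value_iter: "AE \<omega> in sample_space p sel. tracks_value_iter A p c lr Q0 n \<omega>"
proof (induction n)
  case 0
  have "0 - 1 / real (Suc m) \<le> qlearn A c lr Q0 \<omega> i q a" if "a \<in> A q" for \<omega> i q a m
    using qlearn_nonneg[OF that, of \<omega> i] by (smt (verit) divide_nonneg_nonneg of_nat_0_le_iff)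
  then show ?case by (intro AE_I2) (simp add: tracks_value_iter_def value_iter_0)
next
  case (Suc n)
  have "AE \<omega> in sample_space p sel. \<forall>x\<in>{(q, a). a \<in> A q}. \<forall>m::nat. \<forall>\<^sub>F i in sequentially.
      value_iter A p c (Suc n) (fst x) (snd x) - 1 / real (Suc m) \<le> qlearn A c lr Q0 \<omega> i (fst x) (snd x)"
    using AE_eventually_value_iter_Suc_le_qlearn[OF Suc]
    by (intro AE_finite_allI) (auto simp: AE_all_countable)
  then show ?case by (rule eventually_mono) (auto simp: tracks_value_iter_def)
qed

end

theorem mainTheorem13:
  fixes A :: "'q::finite \<Rightarrow> 'a::finite set"
    and p :: "'q \<Rightarrow> 'a \<Rightarrow> 'q list pmf"
    and c :: "'q \<Rightarrow> 'a \<Rightarrow> real"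
    and lr :: "nat \<Rightarrow> real"
    and sel :: "('q \<times> 'a) pmf"
    and pmin :: real
    and Q0 :: "'q \<Rightarrow> 'a \<Rightarrow> real"
    and q :: 'q and a :: 'a
  assumes bmdp: "is_bmdp A p c"
    and lr_range: "\<And>i. 0 \<le> lr i \<and> lr i \<le> 1"
    and lr_sum: "\<not> summable lr"
    and lr_sq: "summable (\<lambda>i. (lr i)\<^sup>2)"
    and sel_support: "set_pmf sel \<subseteq> {(q', a'). a' \<in> A q'}"
    and pmin_pos: "pmin > 0"
    and sel_min: "\<And>q' a'. a' \<in> A q' \<Longrightarrow> pmf sel (q', a') \<ge> pmin"
    and Q0_nonneg: "\<And>q' a'. a' \<in> A q' \<Longrightarrow> Q0 q' a' \<ge> 0"
    and qa: "a \<in> A q"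
    and inf: "Qstar A p c q a = \<infinity>"
  shows "AE \<omega> in sample_space p sel.
           filterlim (\<lambda>i. qlearn A c lr Q0 \<omega> i q a) at_top sequentially"
proof -
  have sel_pos: "\<And>q a. a \<in> A q \<Longrightarrow> 0 < pmf sel (q, a)"
    using sel_min pmin_pos by (meson less_le_trans)
  have "AE \<omega> in sample_space p sel. \<forall>n. tracks_value_iter A p c lr Q0 n \<omega>"
    unfolding AE_all_countable
    using AE_tracks_value_iter[of A p c lr sel Q0, OF bmdp lr_range lr_sum lr_sq sel_support sel_pos Q0_nonneg] by blast
  then show ?thesis
  proof (rule eventually_mono)
    fix \<omega> assume tracks: "\<forall>n. tracks_value_iter A p c lr Q0 n \<omega>"
    show "filterlim (\<lambda>i. qlearn A c lr Q0 \<omega> i q a) at_top sequentially"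
      unfolding filterlim_at_top
    proof
      fix Z :: real
      obtain n where "Z + 1 < value_iter A p c n q a" using value_iter_unbounded[OF bmdp qa inf] by blast
      moreover have "\<forall>\<^sub>F i in sequentially. value_iter A p c n q a - 1 / real (Suc 0) \<le> qlearn A c lr Q0 \<omega> i q a"
        using tracks qa unfolding tracks_value_iter_def by blast
      ultimately show "\<forall>\<^sub>F i in sequentially. Z \<le> qlearn A c lr Q0 \<omega> i q a"
        by (auto elim: eventually_mono)
    qed
  qed
qed

end
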